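(* Consider the federated $\beta$-stochastic sign SGD process described in the context, run for $T$ iterations, and suppose the lower-bound, smoothness, bounded-true-gradient and Gaussian-noise assumptions hold. Let $B=(1+\epsilon_0)B_0$ with $\epsilon_0>\sigma/B_0$, $0<c<\frac35$, $\eta=\frac1{\sqrt{dT}}$, and $c_0=\max\left\{\sqrt{\frac{8\sigma^2}{n}\log\frac6c},\ \sqrt{\frac{8(B+\beta)^2}{p^2}\log\frac{6}{3-5c}}\right\}$. (i) If the adversary is adaptive, or static with $\tau(t)\le\frac{2}{p^2}\log\frac6c$, then $$\frac1T\sum_{t=0}^{T-1}\mathbb{E}\|\nabla F(w(t))\|_1\le\frac1c\left[\frac{(F(w(0))-F^* )\sqrt d}{\sqrt T}+\frac{L\sqrt d}{2\sqrt T}+\frac{d}{\sqrt{2\pi}}(B+\beta)e^{-n/2}+2d\frac{c_0}{\sqrt M}+4d\frac{(B+\beta)\sum_{t=0}^{T-1}\tau(t)}{pTM}\right].$$ (ii) If the adversary is static with $\tau(t)>\frac{2}{p^2}\log\frac6c$, then $$\frac1T\sum_{t=0}^{T-1}\mathbb{E}\|\nabla F(w(t))\|_1\le\frac1c\left[\frac{(F(w(0))-F^* )\sqrt d}{\sqrt T}+\frac{L\sqrt d}{2\sqrt T}+\frac{d}{\sqrt{2\pi}}(B+\beta)e^{-n/2}+2d\frac{c_0}{\sqrt M}+6d\frac{(B+\beta)\sum_{t=0}^{T-1}\tau(t)}{TM}\right].$$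
   Context: Setting: $M$ clients with local functions $f_m:\mathbb{R}^d\to\mathbb{R}$, $F(w)=\frac1M\sum_m f_m(w)$. Parameters: $\beta>0$, $B>0$, mini-batch size $n\ge1$, participation probability $p\in(0,1]$, step size $\eta>0$. $\mathrm{clip}\{g,B\}=\max\{-B,\min\{B,g\}\}$; $\mathrm{sign}(0)=0$. Process: from $w(0)$, in each iteration $t$ a set $\mathcal{S}(t)$ includes each client independently with probability $p$. An adversary chooses Byzantine clients $\mathcal{B}(t)\subseteq[M]$, $\tau(t)=|\mathcal{B}(t)|$; static means chosen independently of $\mathcal{S}(t)$, adaptive means possibly depending on $\mathcal{S}(t)$. Each $m\in\mathcal{S}(t)\setminus\mathcal{B}(t)$ draws $n$ independent stochastic gradients at $w(t)$ and sends $\hat{\boldsymbol g}_m(t)\in\{-1,1\}^d$ with independent coordinates equal to $1$ with probability $\frac{B+\beta+\mathrm{clip}\{\frac1n\sum_j\boldsymbol g^j_{mi}(t),B\}}{2B+2\beta}$ and $-1$ otherwise; each $m\in\mathcal{S}(t)\cap\mathcal{B}(t)$ sends an arbitrary vector in $\{-1,1\}^d$. The server sets $\tilde{\boldsymbol g}(t)$ to the coordinate-wise sign of the average of received vectors (empty average $=0$), and $w(t+1)=w(t)-\eta\tilde{\boldsymbol g}(t)$. Assumptions: $F(w)\ge F^*$ for all $w$; $F(w_1)\le F(w_2)+\langle\nabla F(w_2),w_1-w_2\rangle+\frac L2\|w_1-w_2\|^2$ for all $w_1,w_2$ with some $L\ge0$; for each $i$ there is $B_i>0$ with $|\nabla f_{mi}(w)|\le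 B_i$ for all $m,w$, $B_0=\max_iB_i$; a stochastic gradient $\boldsymbol g_m(w)$ is an independent unbiased estimate of $\nabla f_m(w)$ with $\boldsymbol g_{mi}(w)=\nabla f_{mi}(w)+\xi_{mi}$, $\xi_{mi}\sim\mathcal{N}(0,\sigma^2_{mi})$, and $\sigma^2=\max_{m,i}\sigma^2_{mi}$. The conditions on $\tau(t)$ in (i) and (ii) are required for every $t$. *)

theory Defs
  imports "HOL-Probability.Probability"
begin

text \<open>Vectors in R^d are modelled as real^'d with a finite index type 'd, so d = CARD('d).
Clients are 0,...,M-1.  A history of iterates is a list [w(0),...,w(t)].\<close>

definition clip :: "real \<Rightarrow> real \<Rightarrow> real" where
  "clip g B = max (- B) (min B g)"

definition l1norm :: "real^'d \<Rightarrow> real" where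
  "l1norm x = (\<Sum>i\<in>UNIV. \<bar>x $ i\<bar>)"

definition gauss :: "real \<Rightarrow> real \<Rightarrow> real measure" where
  "gauss mu s = (if s = 0 then return borel mu else density lborel (normal_density mu s))"

text \<open>Probability that a coordinate of an honest message equals 1: expectation, over
n i.i.d. stochastic gradient coordinates g^j = grad_i + xi^j with xi^j ~ N(0,s^2), of
(B + beta + clip(mean_j g^j, B)) / (2B + 2beta).\<close>
definition prob_one :: "nat \<Rightarrow> real \<Rightarrow> real \<Rightarrow> real \<Rightarrow> real \<Rightarrow> real" where
  "prob_one n B \<beta> mu s =
     (LINT x | PiM {..<n} (\<lambda>_. gauss mu s). (B + \<beta> + clip ((\<Sum>j<n. x j) / real n) B) / (2*B + 2*\<beta>))"

definition honest_msg :: "nat \<Rightarrow> real \<Rightarrow> real \<Rightarrow> ('d \<Rightarrow> real) \<Rightarrow> ('d \<Rightarrow> real) \<Rightarrow> (real^'d::finite) pmf" where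
  "honest_msg n B \<beta> g sd =
     map_pmf (\<lambda>b. \<chi> i. if b i then 1 else -1)
       (Pi_pmf UNIV False (\<lambda>i. bernoulli_pmf (prob_one n B \<beta> (g i) (sd i))))"

definition part_pmf :: "nat \<Rightarrow> real \<Rightarrow> nat set pmf" where
  "part_pmf M p = map_pmf (\<lambda>b. {m. m < M \<and> b m}) (Pi_pmf {..<M} False (\<lambda>_. bernoulli_pmf p))"

text \<open>Adversary: Bsel t h S = Byzantine set B(t) (given the history h and S(t));
byz t h S H m = vector sent by Byzantine client m (may depend on history, S(t) and the honest
messages H of this round).\<close>
definition sss_step ::
  "nat \<Rightarrow> nat \<Rightarrow> real \<Rightarrow> real \<Rightarrow> real \<Rightarrow> real
   \<Rightarrow> (nat \<Rightarrow> real^'d \<Rightarrow> real^'d) \<Rightarrow> (nat \<Rightarrow> 'd \<Rightarrow> real)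
   \<Rightarrow> (nat \<Rightarrow> (real^'d) list \<Rightarrow> nat set \<Rightarrow> nat set)
   \<Rightarrow> (nat \<Rightarrow> (real^'d) list \<Rightarrow> nat set \<Rightarrow> (nat \<Rightarrow> real^'d) \<Rightarrow> nat \<Rightarrow> real^'d)
   \<Rightarrow> nat \<Rightarrow> (real^'d::finite) list \<Rightarrow> (real^'d) list pmf" where
  "sss_step M n p B \<beta> \<eta> gradf sd Bsel byz t h =
     bind_pmf (part_pmf M p) (\<lambda>S.
       bind_pmf (Pi_pmf (S - Bsel t h S) 0 (\<lambda>m. honest_msg n B \<beta> (\<lambda>i. gradf m (last h) $ i) (sd m)))
         (\<lambda>H. let v = (\<lambda>m. if m \<in> Bsel t h S then byz t h S H m else H m);
                  avg = (1 / real (card S)) *\<^sub>R (\<Sum>m\<in>S. v m)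
              in return_pmf (h @ [last h - \<eta> *\<^sub>R (\<chi> i. sgn (avg $ i))])))"

primrec sss_proc ::
  "nat \<Rightarrow> nat \<Rightarrow> real \<Rightarrow> real \<Rightarrow> real \<Rightarrow> real
   \<Rightarrow> (nat \<Rightarrow> real^'d \<Rightarrow> real^'d) \<Rightarrow> (nat \<Rightarrow> 'd \<Rightarrow> real)
   \<Rightarrow> (nat \<Rightarrow> (real^'d) list \<Rightarrow> nat set \<Rightarrow> nat set)
   \<Rightarrow> (nat \<Rightarrow> (real^'d) list \<Rightarrow> nat set \<Rightarrow> (nat \<Rightarrow> real^'d) \<Rightarrow> nat \<Rightarrow> real^'d)
   \<Rightarrow> real^'d::finite \<Rightarrow> nat \<Rightarrow> (real^'d) list pmf" where
  "sss_proc M n p B \<beta> \<eta> gradf sd Bsel byz w0 0 = return_pmf [w0]"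
| "sss_proc M n p B \<beta> \<eta> gradf sd Bsel byz w0 (Suc t) =
     bind_pmf (sss_proc M n p B \<beta> \<eta> gradf sd Bsel byz w0 t) (sss_step M n p B \<beta> \<eta> gradf sd Bsel byz t)"

definition static_adv :: "(nat \<Rightarrow> 'h \<Rightarrow> nat set \<Rightarrow> nat set) \<Rightarrow> bool" where
  "static_adv Bsel \<longleftrightarrow> (\<forall>t h S S'. Bsel t h S = Bsel t h S')"

end

theory Submission
  imports Defs
begin

(* For a fixed coordinate i, let g be the averaged true gradient coordinate. An honest client's
   bit has mean within (B + beta) phi(sqrt n) / 2 of its gradient coordinate divided by B + beta
   (the sample mean is Gaussian, and clipping only costs its tails), so the signed sum of received
   bits has mean R of order p M |g| / (B + beta), less 2 per Byzantine participant.  The sum of the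
   M independent, Bernoulli(p)-thinned bits has variance at most M p, hence Chebyshev's inequality
   makes the server's sign wrong with probability at most M p / R^2 <= (1 - c) / 2 unless |g| is
   below the error level; this gives E[g sgn] >= c |g| - err.  Plugging this into the L-smoothness
   descent inequality and telescoping over T rounds with eta = 1 / sqrt (d T) yields the bound. *)

section \<open>Gaussian tails and the clipping bias\<close>

lemma nn_integral_pos_part_times_exp:
  fixes a l :: real
  assumes l: "l > 0"
  shows "(\<integral>\<^sup>+y. ennreal (max 0 (y - a) * exp (- l * (y - a))) \<partial>lborel) = ennreal (1 / l\<^sup>2)"
proof -
  have "(\<integral>\<^sup>+y. ennreal (max 0 (y - a) * exp (- l * (y - a))) \<partial>lborel)
      = ennreal \<bar>1 / l\<bar> * (\<integral>\<^sup>+x. ennreal (max 0 (a + 1 / l * x - a) * exp (- l * (a + 1 / l * x - a))) \<partial>lborel)"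
    using l by (intro nn_integral_real_affine) auto
  also have "(\<lambda>x. ennreal (max 0 (a + 1 / l * x - a) * exp (- l * (a + 1 / l * x - a))))
      = (\<lambda>x. ennreal (1 / l) * (ennreal (x ^ 1 * exp (- x)) * indicator {0..} x))"
  proof
    fix x :: real
    show "ennreal (max 0 (a + 1 / l * x - a) * exp (- l * (a + 1 / l * x - a)))
        = ennreal (1 / l) * (ennreal (x ^ 1 * exp (- x)) * indicator {0..} x)"
    proof (cases "x \<ge> 0")
      case True
      hence "max 0 (a + 1 / l * x - a) * exp (- l * (a + 1 / l * x - a)) = 1 / l * (x * exp (- x))"
        using l by (simp add: max_def)
      moreover have "ennreal (1 / l * (x * exp (- x))) = ennreal (1 / l) * ennreal (x * exp (- x))"
        by (rule ennreal_mult) (use True l in auto)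
      ultimately show ?thesis
        using True by simp
    qed (use l in \<open>simp add: max_def zero_le_divide_iff\<close>)
  qed
  also have "(\<integral>\<^sup>+x. ennreal (1 / l) * (ennreal (x ^ 1 * exp (- x)) * indicator {0..} x) \<partial>lborel) = ennreal (1 / l)"
    by (simp add: nn_integral_cmult nn_intergal_power_times_exp_Ici[of 1, simplified])
  finally show ?thesis
    using l by (simp add: ennreal_mult'[symmetric] power2_eq_square)
qed

lemma normal_density_le_exp_decay:
  fixes \<mu> r k t :: real
  assumes r: "r > 0"
  shows "normal_density \<mu> r (\<mu> + r * k + t) \<le> exp (1 / 2) * std_normal_density k / r * exp (- ((k + 1) / r) * t)"
proof -
  have "(r * k + t)\<^sup>2 = (r * k)\<^sup>2 - r\<^sup>2 + 2 * r * (k + 1) * t + (t - r)\<^sup>2"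
    by (simp add: power2_eq_square algebra_simps)
  hence "(r * k + t)\<^sup>2 \<ge> (r * k)\<^sup>2 - r\<^sup>2 + 2 * r * (k + 1) * t"
    by simp
  hence "(r * k + t)\<^sup>2 / (2 * r\<^sup>2) \<ge> ((r * k)\<^sup>2 - r\<^sup>2 + 2 * r * (k + 1) * t) / (2 * r\<^sup>2)"
    using r by (intro divide_right_mono) auto
  also have "((r * k)\<^sup>2 - r\<^sup>2 + 2 * r * (k + 1) * t) / (2 * r\<^sup>2) = k\<^sup>2 / 2 - 1 / 2 + (k + 1) / r * t"
    using r by (simp add: power2_eq_square field_simps)
  finally have "exp (- (r * k + t)\<^sup>2 / (2 * r\<^sup>2)) \<le> exp (1 / 2 + - k\<^sup>2 / 2 + - ((k + 1) / r) * t)"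
    by (simp only: minus_divide_left[symmetric] exp_le_cancel_iff)
  also have "\<dots> = exp (1 / 2) * exp (- k\<^sup>2 / 2) * exp (- ((k + 1) / r) * t)"
    by (simp only: exp_add)
  finally have "exp (- (r * k + t)\<^sup>2 / (2 * r\<^sup>2)) \<le> exp (1 / 2) * exp (- k\<^sup>2 / 2) * exp (- ((k + 1) / r) * t)" .
  moreover have "normal_density \<mu> r (\<mu> + r * k + t) = exp (- (r * k + t)\<^sup>2 / (2 * r\<^sup>2)) / (sqrt (2 * pi) * r)"
    using r by (simp add: normal_density_def real_sqrt_mult)
  ultimately show ?thesis
    using r by (simp add: std_normal_density_def divide_right_mono)
qed

lemma std_normal_density_antimono:
  fixes a b :: real
  assumes "0 \<le> b" "b \<le> a"
  shows "std_normal_density a \<le> std_normal_density b"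
proof -
  have "b\<^sup>2 \<le> a\<^sup>2"
    using assms by (intro power_mono) auto
  thus ?thesis
    unfolding std_normal_density_def by (intro mult_left_mono) auto
qed

lemma exp_half_div_square_le:
  fixes k :: real
  assumes "k \<ge> 1"
  shows "exp (1 / 2) / (k + 1)\<^sup>2 \<le> 1 / 2"
proof -
  have "exp (1 / 2 :: real) ^ 2 \<le> 2 ^ 2"
    using exp_le by (simp flip: exp_of_nat_mult)
  hence "exp (1 / 2 :: real) \<le> 2"
    by (rule power2_le_imp_le) simp
  moreover have "(k + 1)\<^sup>2 \<ge> 2\<^sup>2"
    using assms by (intro power_mono) auto
  ultimately have "exp (1 / 2) / (k + 1)\<^sup>2 \<le> 2 / 2\<^sup>2"
    by (intro frac_le) auto
  thus ?thesis
    by simp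
qed

lemma normal_upper_excess_le:
  fixes \<mu> r B :: real
  assumes r: "r > 0" and B: "B - \<mu> \<ge> r"
  shows "(\<integral>\<^sup>+y. ennreal (normal_density \<mu> r y * max 0 (y - B)) \<partial>lborel)
           \<le> ennreal (r / 2 * std_normal_density ((B - \<mu>) / r))"
proof -
  define k where "k = (B - \<mu>) / r"
  define A where "A = exp (1 / 2) * std_normal_density k / r"
  have k: "k \<ge> 1" and B_eq: "B = \<mu> + r * k"
    using r B by (simp_all add: k_def field_simps)
  have A: "A \<ge> 0"
    using r by (simp add: A_def)
  have "normal_density \<mu> r y * max 0 (y - B) \<le> A * (max 0 (y - B) * exp (- ((k + 1) / r) * (y - B)))" for y
  proof (cases "y \<ge> B")
    case True
    have "normal_density \<mu> r y \<le> A * exp (- ((k + 1) / r) * (y - B))"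
      using normal_density_le_exp_decay[OF r, of \<mu> k "y - B"] by (simp add: A_def B_eq)
    hence "normal_density \<mu> r y * max 0 (y - B) \<le> A * exp (- ((k + 1) / r) * (y - B)) * max 0 (y - B)"
      by (rule mult_right_mono) simp
    thus ?thesis
      by (simp only: mult_ac)
  qed (use A in simp)
  hence "(\<integral>\<^sup>+y. ennreal (normal_density \<mu> r y * max 0 (y - B)) \<partial>lborel)
      \<le> (\<integral>\<^sup>+y. ennreal A * ennreal (max 0 (y - B) * exp (- ((k + 1) / r) * (y - B))) \<partial>lborel)"
    using A by (intro nn_integral_mono) (simp add: ennreal_mult[symmetric] ennreal_leI)
  also have "\<dots> = ennreal A * (\<integral>\<^sup>+y. ennreal (max 0 (y - B) * exp (- ((k + 1) / r) * (y - B))) \<partial>lborel)"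
    by (rule nn_integral_cmult) measurable
  also have "(\<integral>\<^sup>+y. ennreal (max 0 (y - B) * exp (- ((k + 1) / r) * (y - B))) \<partial>lborel) = ennreal (1 / ((k + 1) / r)\<^sup>2)"
    using r k by (intro nn_integral_pos_part_times_exp) simp
  also have "ennreal A * ennreal (1 / ((k + 1) / r)\<^sup>2) = ennreal (A * (r / (k + 1))\<^sup>2)"
    by (subst ennreal_mult'[OF A]) (simp add: power_divide)
  also have "A * (r / (k + 1))\<^sup>2 = r * std_normal_density k * (exp (1 / 2) / (k + 1)\<^sup>2)"
    using r by (simp add: A_def power_divide power2_eq_square)
  also have "\<dots> \<le> r * std_normal_density k * (1 / 2)"
    using r exp_half_div_square_le[OF k] by (intro mult_left_mono) auto
  finally show ?thesis
    by (simp add: k_def ennreal_leI)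
qed

lemma normal_lower_excess_le:
  fixes \<mu> r B :: real
  assumes r: "r > 0" and B: "B + \<mu> \<ge> r"
  shows "(\<integral>\<^sup>+y. ennreal (normal_density \<mu> r y * max 0 (- y - B)) \<partial>lborel)
           \<le> ennreal (r / 2 * std_normal_density ((B + \<mu>) / r))"
proof -
  have "(\<integral>\<^sup>+y. ennreal (normal_density (- \<mu>) r y * max 0 (y - B)) \<partial>lborel)
      = ennreal \<bar>- 1\<bar> * (\<integral>\<^sup>+y. ennreal (normal_density (- \<mu>) r (0 + - 1 * y) * max 0 (0 + - 1 * y - B)) \<partial>lborel)"
    by (intro nn_integral_real_affine) auto
  also have "(\<lambda>y. ennreal (normal_density (- \<mu>) r (0 + - 1 * y) * max 0 (0 + - 1 * y - B)))
      = (\<lambda>y. ennreal (normal_density \<mu> r y * max 0 (- y - B)))"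
    by (simp add: normal_density_def power2_commute)
  finally show ?thesis
    using normal_upper_excess_le[of r B "- \<mu>"] r B by simp
qed

lemma integrable_normal_density_times_pos_part:
  fixes \<mu> r a b :: real
  assumes r: "r > 0"
  shows "integrable lborel (\<lambda>y. normal_density \<mu> r y * max 0 (a * y + b))"
proof (rule Bochner_Integration.integrable_bound)
  show "integrable lborel (\<lambda>y. \<bar>a\<bar> * (normal_density \<mu> r y * \<bar>y - \<mu>\<bar> ^ 1) + (\<bar>a\<bar> * \<bar>\<mu>\<bar> + \<bar>b\<bar>) * normal_density \<mu> r y)"
    by (intro Bochner_Integration.integrable_add integrable_mult_right integrable_normal_moment_abs
        integrable_normal_density r)
  have "\<bar>max 0 (a * y + b)\<bar> \<le> \<bar>a\<bar> * \<bar>y - \<mu>\<bar> + (\<bar>a\<bar> * \<bar>\<mu>\<bar> + \<bar>b\<bar>)" for y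
  proof -
    have "\<bar>a\<bar> * \<bar>y\<bar> \<le> \<bar>a\<bar> * (\<bar>y - \<mu>\<bar> + \<bar>\<mu>\<bar>)"
      using abs_triangle_ineq[of "y - \<mu>" \<mu>] by (intro mult_left_mono) auto
    moreover have "\<bar>max 0 (a * y + b)\<bar> \<le> \<bar>a\<bar> * \<bar>y\<bar> + \<bar>b\<bar>"
      using abs_ge_self[of "a * y"] abs_ge_self[of b] by (simp add: max_def abs_mult[symmetric])
    ultimately show ?thesis
      by (simp add: distrib_left)
  qed
  hence "normal_density \<mu> r y * \<bar>max 0 (a * y + b)\<bar>
      \<le> normal_density \<mu> r y * (\<bar>a\<bar> * \<bar>y - \<mu>\<bar> + (\<bar>a\<bar> * \<bar>\<mu>\<bar> + \<bar>b\<bar>))" for y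
    by (intro mult_left_mono) auto
  thus "AE y in lborel. norm (normal_density \<mu> r y * max 0 (a * y + b))
      \<le> norm (\<bar>a\<bar> * (normal_density \<mu> r y * \<bar>y - \<mu>\<bar> ^ 1) + (\<bar>a\<bar> * \<bar>\<mu>\<bar> + \<bar>b\<bar>) * normal_density \<mu> r y)"
    by (intro AE_I2) (simp add: abs_mult algebra_simps)
qed simp

text \<open>Clipping at \<open>\<plusminus>B\<close> moves the mean of \<open>N(\<mu>, r\<^sup>2)\<close> by at most the larger of the two tail excesses.\<close>

lemma normal_clip_bias_le:
  fixes \<mu> r B \<kappa> :: real
  assumes r: "r > 0" and \<kappa>: "\<kappa> \<ge> 1" and upper: "B - \<mu> \<ge> r * \<kappa>" and lower: "B + \<mu> \<ge> r * \<kappa>"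
  shows "\<bar>(\<integral>y. normal_density \<mu> r y * clip y B \<partial>lborel) - \<mu>\<bar> \<le> r / 2 * std_normal_density \<kappa>"
proof -
  define T1 where "T1 = (\<integral>y. normal_density \<mu> r y * max 0 (y - B) \<partial>lborel)"
  define T2 where "T2 = (\<integral>y. normal_density \<mu> r y * max 0 (- y - B) \<partial>lborel)"
  have int1: "integrable lborel (\<lambda>y. normal_density \<mu> r y * max 0 (y - B))"
    using integrable_normal_density_times_pos_part[OF r, of \<mu> 1 "- B"] by simp
  have int2: "integrable lborel (\<lambda>y. normal_density \<mu> r y * max 0 (- y - B))"
    using integrable_normal_density_times_pos_part[OF r, of \<mu> "- 1" "- B"] by simp
  have r_le: "r \<le> r * \<kappa>"
    using r \<kappa> by simp
  have tail: "(\<integral>y. f y \<partial>lborel) \<le> r / 2 * std_normal_density \<kappa>"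
    if "(\<integral>\<^sup>+y. ennreal (f y) \<partial>lborel) \<le> ennreal (r / 2 * std_normal_density (a / r))" "a \<ge> r * \<kappa>"
    for f a
  proof -
    have "(\<integral>y. f y \<partial>lborel) \<le> r / 2 * std_normal_density (a / r)"
      using that(1) r by (intro integral_real_bounded) auto
    also have "\<dots> \<le> r / 2 * std_normal_density \<kappa>"
      using r \<kappa> that(2) by (intro mult_left_mono std_normal_density_antimono) (auto simp: field_simps)
    finally show ?thesis .
  qed
  have "B > 0"
    using r r_le upper lower by linarith
  hence "normal_density \<mu> r y * clip y B
      = normal_density \<mu> r y * y + normal_density \<mu> r y * max 0 (- y - B)
        - normal_density \<mu> r y * max 0 (y - B)" for y
    by (cases "y \<le> - B"; cases "y \<le> B") (auto simp: clip_def algebra_simps max_def min_def)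
  hence "(\<integral>y. normal_density \<mu> r y * clip y B \<partial>lborel) = \<mu> + T2 - T1"
    using integral_normal_moment_nz_1[OF r, of \<mu>] integrable_normal_moment_nz_1[OF r, of \<mu>] int1 int2
    by (simp add: T1_def T2_def Bochner_Integration.integral_diff Bochner_Integration.integral_add)
  moreover have "T1 \<ge> 0" "T2 \<ge> 0"
    unfolding T1_def T2_def by (auto intro!: integral_nonneg_AE)
  moreover have "T1 \<le> r / 2 * std_normal_density \<kappa>"
    unfolding T1_def using normal_upper_excess_le[of r B \<mu>] r r_le upper by (intro tail) auto
  moreover have "T2 \<le> r / 2 * std_normal_density \<kappa>"
    unfolding T2_def using normal_lower_excess_le[of r B \<mu>] r r_le lower by (intro tail) auto
  ultimately show ?thesis
    by linarith
qed

lemma sets_gauss [simp]: "sets (gauss \<mu> s) = sets borel"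
  by (simp add: gauss_def)

lemma prob_space_gauss: "prob_space (gauss \<mu> s)"
proof (cases "s = 0")
  case False
  have "normal_density \<mu> s = normal_density \<mu> \<bar>s\<bar>"
    by (simp add: normal_density_def fun_eq_iff)
  thus ?thesis
    using False prob_space_normal_density[of "\<bar>s\<bar>" \<mu>] by (simp add: gauss_def)
qed (simp add: gauss_def prob_space_return)

lemma indep_vars_PiM_components:
  assumes I: "finite I" "I \<noteq> {}" and M: "\<And>i. i \<in> I \<Longrightarrow> prob_space (M i)"
  shows "prob_space.indep_vars (PiM I M) M (\<lambda>i x. x i) I"
proof -
  interpret P: prob_space "PiM I M"
    by (intro prob_space_PiM M)
  show ?thesis
  proof (subst P.indep_vars_iff_distr_eq_PiM')
    have "distr (PiM I M) (PiM I M) (\<lambda>x. \<lambda>i\<in>I. x i) = distr (PiM I M) (PiM I M) (\<lambda>x. x)"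
      by (intro distr_cong) (auto simp: space_PiM)
    also have "\<dots> = PiM I (\<lambda>i. distr (PiM I M) (M i) (\<lambda>x. x i))"
      by (simp add: distr_PiM_component M cong: PiM_cong)
    finally show "distr (PiM I M) (PiM I M) (\<lambda>x. \<lambda>i\<in>I. x i) = PiM I (\<lambda>i. distr (PiM I M) (M i) (\<lambda>x. x i))" .
  qed (use I in auto)
qed

lemma gauss_sample_mean_distributed:
  fixes n :: nat and \<mu> s :: real
  assumes s: "s > 0" and n: "n \<ge> 1"
  shows "distributed (PiM {..<n} (\<lambda>_. gauss \<mu> s)) lborel (\<lambda>x. (\<Sum>j<n. x j) / real n) (normal_density \<mu> (s / sqrt n))"
proof -
  define P where "P = PiM {..<n} (\<lambda>_. gauss \<mu> s)"
  interpret P: prob_space P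
    unfolding P_def by (intro prob_space_PiM prob_space_gauss)
  have nonempty: "{..<n} \<noteq> {}"
    using n by (auto simp: lessThan_empty_iff)
  have "P.indep_vars (\<lambda>_. gauss \<mu> s) (\<lambda>j x. x j) {..<n}"
    unfolding P_def using nonempty by (intro indep_vars_PiM_components prob_space_gauss) auto
  hence indep: "P.indep_vars (\<lambda>_. borel) (\<lambda>j x. x j) {..<n}"
    by (simp add: P.indep_vars_def measurable_cong_sets[OF refl sets_gauss])
  have "distributed P lborel (\<lambda>x. x j) (normal_density \<mu> s)" if "j \<in> {..<n}" for j
    unfolding distributed_def
  proof (intro conjI)
    have "distr P lborel (\<lambda>x. x j) = distr P (gauss \<mu> s) (\<lambda>x. x j)"
      by (intro distr_cong) auto
    also have "\<dots> = gauss \<mu> s"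
      unfolding P_def using that by (intro distr_PiM_component prob_space_gauss)
    finally show "distr P lborel (\<lambda>x. x j) = density lborel (\<lambda>x. ennreal (normal_density \<mu> s x))"
      using s by (simp add: gauss_def)
    show "(\<lambda>x. x j) \<in> measurable P lborel"
      using that unfolding P_def by (simp add: measurable_cong_sets[OF sets_PiM_cong[OF refl sets_gauss] refl])
  qed simp
  hence "distributed P lborel (\<lambda>x. \<Sum>j<n. x j) (normal_density (\<Sum>j<n. \<mu>) (sqrt (\<Sum>j<n. s\<^sup>2)))"
    using nonempty s by (intro P.sum_indep_normal indep) auto
  hence "distributed P lborel (\<lambda>x. 0 + 1 / real n * (\<Sum>j<n. x j))
      (normal_density (0 + 1 / real n * (real n * \<mu>)) (\<bar>1 / real n\<bar> * (sqrt (real n) * s)))"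
    using n s by (intro P.normal_density_affine) (auto simp: real_sqrt_mult)
  moreover have "\<bar>1 / real n\<bar> * (sqrt (real n) * s) = s / sqrt n"
    using n by (simp add: field_simps flip: real_sqrt_mult[of n n])
  ultimately show ?thesis
    using n by (simp add: P_def)
qed

definition expected_clipped_mean :: "nat \<Rightarrow> real \<Rightarrow> real \<Rightarrow> real \<Rightarrow> real" where
  "expected_clipped_mean n B \<mu> s = (\<integral>x. clip ((\<Sum>j<n. x j) / real n) B \<partial>PiM {..<n} (\<lambda>_. gauss \<mu> s))"

lemma clip_sample_mean_measurable:
  "(\<lambda>x. clip ((\<Sum>j<n. x j) / real n) B) \<in> borel_measurable (PiM {..<n} (\<lambda>_. gauss \<mu> s))"
proof -
  have "(\<lambda>x. clip ((\<Sum>j<n. x j) / real n) B) \<in> borel_measurable (PiM {..<n} (\<lambda>_. borel :: real measure))"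
    unfolding clip_def by measurable
  thus ?thesis
    by (simp add: measurable_cong_sets[OF sets_PiM_cong[OF refl sets_gauss] refl])
qed

lemma integrable_clip_sample_mean:
  "integrable (PiM {..<n} (\<lambda>_. gauss \<mu> s)) (\<lambda>x. clip ((\<Sum>j<n. x j) / real n) B)"
proof -
  interpret prob_space "PiM {..<n} (\<lambda>_. gauss \<mu> s)"
    by (intro prob_space_PiM prob_space_gauss)
  show ?thesis
    using clip_sample_mean_measurable by (intro integrable_const_bound[where B = "\<bar>B\<bar>"]) (auto simp: clip_def)
qed

lemma abs_expected_clipped_mean_le:
  assumes "B \<ge> 0"
  shows "\<bar>expected_clipped_mean n B \<mu> s\<bar> \<le> B"
proof -
  interpret prob_space "PiM {..<n} (\<lambda>_. gauss \<mu> s)"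
    by (intro prob_space_PiM prob_space_gauss)
  have "\<bar>expected_clipped_mean n B \<mu> s\<bar> \<le> (\<integral>x. \<bar>clip ((\<Sum>j<n. x j) / real n) B\<bar> \<partial>PiM {..<n} (\<lambda>_. gauss \<mu> s))"
    unfolding expected_clipped_mean_def by (rule integral_abs_bound)
  also have "\<dots> \<le> (\<integral>x. B \<partial>PiM {..<n} (\<lambda>_. gauss \<mu> s))"
    using assms integrable_clip_sample_mean by (intro integral_mono) (auto simp: clip_def)
  finally show ?thesis
    by (simp add: prob_space)
qed

lemma prob_one_eq:
  assumes "B + \<beta> \<noteq> 0"
  shows "prob_one n B \<beta> \<mu> s = (B + \<beta> + expected_clipped_mean n B \<mu> s) / (2 * B + 2 * \<beta>)"
proof -
  interpret prob_space "PiM {..<n} (\<lambda>_. gauss \<mu> s)"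
    by (intro prob_space_PiM prob_space_gauss)
  show ?thesis
    using integrable_clip_sample_mean
    by (simp add: prob_one_def expected_clipped_mean_def prob_space Bochner_Integration.integral_add)
qed

lemma prob_one_bounds:
  assumes "B \<ge> 0" "\<beta> > 0"
  shows "0 \<le> prob_one n B \<beta> \<mu> s" "prob_one n B \<beta> \<mu> s \<le> 1"
  using abs_expected_clipped_mean_le[of B n \<mu> s] assms by (simp_all add: prob_one_eq field_simps)

lemma expected_clipped_mean_bias:
  assumes n: "n \<ge> 1" and s: "s \<ge> 0" and B: "\<bar>\<mu>\<bar> + s < B"
  shows "\<bar>expected_clipped_mean n B \<mu> s - \<mu>\<bar> \<le> s / 2 * std_normal_density (sqrt n)"
proof (cases "s = 0")
  case True
  have "PiM {..<n} (\<lambda>_. gauss \<mu> s) = return (PiM {..<n} (\<lambda>_. borel)) (\<lambda>j\<in>{..<n}. \<mu>)"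
    using True by (simp add: gauss_def PiM_return)
  moreover have "clip ((\<Sum>j<n. (\<lambda>j\<in>{..<n}. \<mu>) j) / real n) B = \<mu>"
    using n B True by (simp add: clip_def)
  ultimately show ?thesis
    using True clip_sample_mean_measurable[of n B \<mu> s]
    by (simp add: expected_clipped_mean_def integral_return space_PiM)
next
  case False
  define r where "r = s / sqrt n"
  have sqrt_n: "sqrt (real n) \<ge> 1"
    using n by simp
  have r: "r > 0" "r \<le> s" "r * sqrt n = s"
    using False s sqrt_n by (auto simp: r_def field_simps)
  have "expected_clipped_mean n B \<mu> s = (\<integral>y. normal_density \<mu> r y * clip y B \<partial>lborel)"
    unfolding expected_clipped_mean_def r_def
    using gauss_sample_mean_distributed[of s n \<mu>] False s n
    by (intro distributed_integral[symmetric]) (auto simp: clip_def)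
  hence "\<bar>expected_clipped_mean n B \<mu> s - \<mu>\<bar> \<le> r / 2 * std_normal_density (sqrt n)"
    using normal_clip_bias_le[of r "sqrt n" B \<mu>] r sqrt_n B by auto
  also have "\<dots> \<le> s / 2 * std_normal_density (sqrt n)"
    using r by (intro mult_right_mono) auto
  finally show ?thesis .
qed

section \<open>Finite product distributions\<close>

lemma expectation_bind_pmf_finite:
  fixes f :: "'b \<Rightarrow> real"
  assumes "finite (set_pmf X)" "\<And>x. x \<in> set_pmf X \<Longrightarrow> finite (set_pmf (K x))"
  shows "measure_pmf.expectation (bind_pmf X K) f = measure_pmf.expectation X (\<lambda>x. measure_pmf.expectation (K x) f)"
proof -
  have "measure_pmf.expectation (bind_pmf X K) f = (\<Sum>x\<in>set_pmf X. pmf X x *\<^sub>R measure_pmf.expectation (K x) f)"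
    using assms by (intro pmf_expectation_bind) auto
  also have "\<dots> = measure_pmf.expectation X (\<lambda>x. measure_pmf.expectation (K x) f)"
    using assms by (intro integral_measure_pmf[symmetric]) auto
  finally show ?thesis .
qed

lemma expectation_pair_pmf_mult:
  fixes f :: "'a \<Rightarrow> real" and g :: "'b \<Rightarrow> real"
  assumes "finite (set_pmf X)" "finite (set_pmf Y)"
  shows "measure_pmf.expectation (pair_pmf X Y) (\<lambda>z. f (fst z) * g (snd z))
       = measure_pmf.expectation X f * measure_pmf.expectation Y g"
proof -
  have "measure_pmf.expectation (pair_pmf X Y) (\<lambda>z. f (fst z) * g (snd z))
      = measure_pmf.expectation X (\<lambda>x. measure_pmf.expectation (map_pmf (Pair x) Y) (\<lambda>z. f (fst z) * g (snd z)))"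
    unfolding pair_pmf_def map_pmf_def[symmetric] using assms by (intro expectation_bind_pmf_finite) auto
  thus ?thesis
    by simp
qed

lemma finite_set_Pi_pmf:
  assumes "finite A" "\<And>a. a \<in> A \<Longrightarrow> finite (set_pmf (P a))"
  shows "finite (set_pmf (Pi_pmf A d P))"
  using assms by (simp add: set_Pi_pmf finite_PiE_dflt)

lemma pair_Pi_pmf_eq_map_Pi_pmf:
  assumes "finite A"
  shows "pair_pmf (Pi_pmf A d1 P1) (Pi_pmf A d2 P2)
       = map_pmf (\<lambda>f. (fst \<circ> f, snd \<circ> f)) (Pi_pmf A (d1, d2) (\<lambda>a. pair_pmf (P1 a) (P2 a)))"
proof (rule pmf_eqI)
  fix z :: "('a \<Rightarrow> 'b) \<times> ('a \<Rightarrow> 'c)"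
  obtain f1 f2 where z: "z = (f1, f2)"
    by (cases z)
  have inj: "inj (\<lambda>f :: 'a \<Rightarrow> 'b \<times> 'c. (fst \<circ> f, snd \<circ> f))"
    by (intro injI) (auto simp: fun_eq_iff prod_eq_iff)
  have z': "z = (\<lambda>f. (fst \<circ> f, snd \<circ> f)) (\<lambda>x. (f1 x, f2 x))"
    using z by (auto simp: o_def)
  have "pmf (map_pmf (\<lambda>f. (fst \<circ> f, snd \<circ> f)) (Pi_pmf A (d1, d2) (\<lambda>a. pair_pmf (P1 a) (P2 a)))) z
      = pmf (Pi_pmf A (d1, d2) (\<lambda>a. pair_pmf (P1 a) (P2 a))) (\<lambda>x. (f1 x, f2 x))"
    unfolding z' by (rule pmf_map_inj'[OF inj])
  also have "\<dots> = pmf (pair_pmf (Pi_pmf A d1 P1) (Pi_pmf A d2 P2)) z"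
    unfolding z pmf_pair using assms by (auto simp: pmf_Pi prod.distrib pmf_pair)
  finally show "pmf (pair_pmf (Pi_pmf A d1 P1) (Pi_pmf A d2 P2)) z
      = pmf (map_pmf (\<lambda>f. (fst \<circ> f, snd \<circ> f)) (Pi_pmf A (d1, d2) (\<lambda>a. pair_pmf (P1 a) (P2 a)))) z" ..
qed

lemma expectation_sum_squared_Pi_pmf:
  fixes \<psi> :: "'a \<Rightarrow> 'b \<Rightarrow> real"
  assumes "finite A" "\<And>a. a \<in> A \<Longrightarrow> finite (set_pmf (P a))"
    and "\<And>a. a \<in> A \<Longrightarrow> measure_pmf.expectation (P a) (\<psi> a) = 0"
  shows "measure_pmf.expectation (Pi_pmf A d P) (\<lambda>f. (\<Sum>a\<in>A. \<psi> a (f a))\<^sup>2)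
       = (\<Sum>a\<in>A. measure_pmf.expectation (P a) (\<lambda>y. (\<psi> a y)\<^sup>2))"
  using assms
proof (induction A rule: finite_induct)
  case (insert x A)
  let ?S = "\<lambda>f. \<Sum>a\<in>A. \<psi> a (f a)"
  let ?Q = "pair_pmf (P x) (Pi_pmf A d P)"
  have fin: "finite (set_pmf (Pi_pmf A d P))" "finite (set_pmf (P x))"
    using insert by (auto intro: finite_set_Pi_pmf)
  note integrable = integrable_measure_pmf_finite[of ?Q]
  have "measure_pmf.expectation (Pi_pmf (insert x A) d P) (\<lambda>f. (\<Sum>a\<in>insert x A. \<psi> a (f a))\<^sup>2)
      = measure_pmf.expectation ?Q (\<lambda>z. (\<psi> x (fst z))\<^sup>2 + 2 * (\<psi> x (fst z) * ?S (snd z)) + (?S (snd z))\<^sup>2)"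
  proof -
    have "(\<Sum>a\<in>A. \<psi> a (if a = x then y else f a)) = ?S f" for y f
      using insert.hyps by (intro sum.cong) auto
    thus ?thesis
      using insert.hyps by (simp add: Pi_pmf_insert case_prod_unfold power2_sum algebra_simps)
  qed
  also have "\<dots> = measure_pmf.expectation (P x) (\<lambda>y. (\<psi> x y)\<^sup>2)
       + 2 * (measure_pmf.expectation (P x) (\<psi> x) * measure_pmf.expectation (Pi_pmf A d P) ?S)
       + measure_pmf.expectation (Pi_pmf A d P) (\<lambda>f. (?S f)\<^sup>2)"
    using fin expectation_pair_pmf_mult[OF fin(2,1), of "\<psi> x" ?S]
      expectation_pair_pmf_fst[of "P x" "Pi_pmf A d P" "\<lambda>y. (\<psi> x y)\<^sup>2"]
      expectation_pair_pmf_snd[of "P x" "Pi_pmf A d P" "\<lambda>f. (?S f)\<^sup>2"]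
    by (simp add: Bochner_Integration.integral_add integrable)
  also have "\<dots> = (\<Sum>a\<in>insert x A. measure_pmf.expectation (P a) (\<lambda>y. (\<psi> a y)\<^sup>2))"
    using insert by simp
  finally show ?case .
qed simp

section \<open>A Chebyshev bound for the sign of a thinned vote\<close>

definition thinned_pmf :: "nat \<Rightarrow> real \<Rightarrow> (nat \<Rightarrow> 'v::zero pmf) \<Rightarrow> (nat \<Rightarrow> bool \<times> 'v) pmf" where
  "thinned_pmf M p D = Pi_pmf {..<M} (False, 0) (\<lambda>m. pair_pmf (bernoulli_pmf p) (D m))"

definition thinned_sum :: "nat \<Rightarrow> (nat \<Rightarrow> 'v \<Rightarrow> real) \<Rightarrow> (nat \<Rightarrow> bool \<times> 'v) \<Rightarrow> real" where
  "thinned_sum M \<theta> q = (\<Sum>m<M. if fst (q m) then \<theta> m (snd (q m)) else 0)"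

lemma finite_set_thinned_pmf:
  assumes "\<And>m. finite (set_pmf (D m))"
  shows "finite (set_pmf (thinned_pmf M p D))"
  unfolding thinned_pmf_def using assms by (intro finite_set_Pi_pmf) (auto intro: finite_subset[of _ UNIV])

lemma expectation_bernoulli_gate:
  fixes f :: "'v \<Rightarrow> real"
  assumes "0 \<le> p" "p \<le> 1" "finite (set_pmf D)"
  shows "measure_pmf.expectation (pair_pmf (bernoulli_pmf p) D) (\<lambda>z. if fst z then f (snd z) else 0)
       = p * measure_pmf.expectation D f"
proof -
  have "measure_pmf.expectation (pair_pmf (bernoulli_pmf p) D) (\<lambda>z. (if fst z then 1 else 0) * f (snd z))
      = measure_pmf.expectation (bernoulli_pmf p) (\<lambda>b. if b then 1 else 0) * measure_pmf.expectation D f"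
    using assms by (intro expectation_pair_pmf_mult) (auto intro: finite_subset[of _ UNIV])
  moreover have "(\<lambda>z. (if fst z then 1 else 0) * f (snd z)) = (\<lambda>z. if fst z then f (snd z) else 0)"
    by (simp add: fun_eq_iff)
  ultimately show ?thesis
    using assms by simp
qed

lemma thinned_sum_variance_le:
  assumes p: "0 \<le> p" "p \<le> 1" and fin: "\<And>m. finite (set_pmf (D m))"
    and bounded: "\<And>m x. m < M \<Longrightarrow> x \<in> set_pmf (D m) \<Longrightarrow> \<bar>\<theta> m x\<bar> \<le> 1"
  shows "measure_pmf.expectation (thinned_pmf M p D)
           (\<lambda>q. (thinned_sum M \<theta> q - p * (\<Sum>m<M. measure_pmf.expectation (D m) (\<theta> m)))\<^sup>2) \<le> real M * p"
proof -
  define P where "P = (\<lambda>m. pair_pmf (bernoulli_pmf p) (D m))"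
  define X where "X = (\<lambda>m (z :: bool \<times> _). if fst z then \<theta> m (snd z) else 0)"
  have finP: "finite (set_pmf (P m))" for m
    unfolding P_def using fin by simp
  have EX: "measure_pmf.expectation (P m) (X m) = p * measure_pmf.expectation (D m) (\<theta> m)" for m
    unfolding P_def X_def using p fin by (rule expectation_bernoulli_gate)
  have "measure_pmf.expectation (thinned_pmf M p D)
           (\<lambda>q. (thinned_sum M \<theta> q - p * (\<Sum>m<M. measure_pmf.expectation (D m) (\<theta> m)))\<^sup>2)
      = measure_pmf.expectation (Pi_pmf {..<M} (False, 0) P)
           (\<lambda>q. (\<Sum>m<M. X m (q m) - p * measure_pmf.expectation (D m) (\<theta> m))\<^sup>2)"
    by (simp add: thinned_pmf_def thinned_sum_def P_def X_def sum_subtractf sum_distrib_left)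
  also have "\<dots> = (\<Sum>m<M. measure_pmf.variance (P m) (X m))"
  proof (unfold EX[symmetric], rule expectation_sum_squared_Pi_pmf)
    show "measure_pmf.expectation (P m) (\<lambda>y. X m y - measure_pmf.expectation (P m) (X m)) = 0" for m
      by (simp add: Bochner_Integration.integral_diff integrable_measure_pmf_finite[OF finP] measure_pmf.prob_space)
  qed (simp_all add: finP)
  also have "\<dots> \<le> (\<Sum>m<M. p)"
  proof (intro sum_mono)
    fix m assume m: "m \<in> {..<M}"
    have "measure_pmf.variance (P m) (X m) \<le> measure_pmf.expectation (P m) (\<lambda>z. (X m z)\<^sup>2)"
      using measure_pmf.variance_eq[of "P m" "X m"] by (simp add: integrable_measure_pmf_finite[OF finP])
    also have "\<dots> \<le> measure_pmf.expectation (P m) (\<lambda>z. if fst z then 1 else 0)"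
    proof (intro integral_mono_AE integrable_measure_pmf_finite[OF finP] AE_pmfI)
      fix z assume "z \<in> set_pmf (P m)"
      hence "\<bar>\<theta> m (snd z)\<bar> \<le> 1"
        using bounded m by (auto simp: P_def)
      thus "(X m z)\<^sup>2 \<le> (if fst z then 1 else 0)"
        by (simp add: X_def abs_square_le_1)
    qed
    also have "\<dots> = p"
      using expectation_bernoulli_gate[OF p fin, of m "\<lambda>_. 1"] by (simp add: P_def measure_pmf.prob_space)
    finally show "measure_pmf.variance (P m) (X m) \<le> p" .
  qed
  finally show ?thesis
    by simp
qed

lemma expectation_mult_sgn_ge:
  fixes Q :: "'a pmf" and X Y :: "'a \<Rightarrow> real" and g R :: real
  assumes fin: "finite (set_pmf Q)" and R: "R > 0"
    and dominated: "\<And>q. q \<in> set_pmf Q \<Longrightarrow> sgn g * X q \<ge> Y q"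
  shows "measure_pmf.expectation Q (\<lambda>q. g * sgn (X q))
      \<ge> \<bar>g\<bar> * (1 - 2 * measure_pmf.expectation Q (\<lambda>q. (Y q - R)\<^sup>2) / R\<^sup>2)"
proof -
  note integrable = integrable_measure_pmf_finite[OF fin]
  have "g * sgn (X q) \<ge> \<bar>g\<bar> * (1 - 2 * (Y q - R)\<^sup>2 / R\<^sup>2)" if q: "q \<in> set_pmf Q" for q
  proof (cases "sgn g * X q > 0")
    case True
    hence "g * sgn (X q) = \<bar>g\<bar>"
      by (cases "g > 0"; cases "g < 0") (auto simp: sgn_if zero_less_mult_iff)
    moreover have "\<bar>g\<bar> * (1 - 2 * (Y q - R)\<^sup>2 / R\<^sup>2) \<le> \<bar>g\<bar> * 1"
      by (intro mult_left_mono) auto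
    ultimately show ?thesis
      by simp
  next
    case False
    hence "Y q \<le> 0"
      using dominated[OF q] by simp
    hence "R\<^sup>2 \<le> (Y q - R)\<^sup>2"
      using R by (simp add: power2_commute[of "Y q"] power_mono)
    hence "1 - 2 * (Y q - R)\<^sup>2 / R\<^sup>2 \<le> - 1"
      using R by (simp add: field_simps)
    hence "\<bar>g\<bar> * (1 - 2 * (Y q - R)\<^sup>2 / R\<^sup>2) \<le> - \<bar>g\<bar>"
      using mult_left_mono[of _ "- 1" "\<bar>g\<bar>"] by simp
    moreover have "- \<bar>g\<bar> \<le> g * sgn (X q)"
      by (auto simp: sgn_if)
    ultimately show ?thesis
      by linarith
  qed
  hence "measure_pmf.expectation Q (\<lambda>q. \<bar>g\<bar> * (1 - 2 * (Y q - R)\<^sup>2 / R\<^sup>2))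
      \<le> measure_pmf.expectation Q (\<lambda>q. g * sgn (X q))"
    by (intro integral_mono_AE integrable AE_pmfI)
  moreover have "measure_pmf.expectation Q (\<lambda>q. \<bar>g\<bar> * (1 - 2 * (Y q - R)\<^sup>2 / R\<^sup>2))
      = \<bar>g\<bar> * (1 - 2 * measure_pmf.expectation Q (\<lambda>q. (Y q - R)\<^sup>2) / R\<^sup>2)"
    by (simp add: Bochner_Integration.integral_diff integrable measure_pmf.prob_space del: integral_mult_right_zero)
  ultimately show ?thesis
    by linarith
qed

lemma thinned_sign_agreement_ge:
  assumes p: "0 \<le> p" "p \<le> 1" and fin: "\<And>m. finite (set_pmf (D m))"
    and bounded: "\<And>m x. m < M \<Longrightarrow> x \<in> set_pmf (D m) \<Longrightarrow> \<bar>\<theta> m x\<bar> \<le> 1"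
    and dominated: "\<And>q. q \<in> set_pmf (thinned_pmf M p D) \<Longrightarrow> sgn g * X q \<ge> thinned_sum M \<theta> q + K"
    and R: "R = p * (\<Sum>m<M. measure_pmf.expectation (D m) (\<theta> m)) + K" "R > 0"
  shows "measure_pmf.expectation (thinned_pmf M p D) (\<lambda>q. g * sgn (X q)) \<ge> \<bar>g\<bar> * (1 - 2 * (real M * p) / R\<^sup>2)"
proof -
  let ?Q = "thinned_pmf M p D"
  have "measure_pmf.expectation ?Q (\<lambda>q. g * sgn (X q))
      \<ge> \<bar>g\<bar> * (1 - 2 * measure_pmf.expectation ?Q (\<lambda>q. (thinned_sum M \<theta> q + K - R)\<^sup>2) / R\<^sup>2)"
    using finite_set_thinned_pmf[OF fin] R(2) dominated by (rule expectation_mult_sgn_ge)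
  also have "(\<lambda>q. (thinned_sum M \<theta> q + K - R)\<^sup>2)
      = (\<lambda>q. (thinned_sum M \<theta> q - p * (\<Sum>m<M. measure_pmf.expectation (D m) (\<theta> m)))\<^sup>2)"
    by (simp add: R(1))
  also have "\<bar>g\<bar> * (1 - 2 * measure_pmf.expectation ?Q
        (\<lambda>q. (thinned_sum M \<theta> q - p * (\<Sum>m<M. measure_pmf.expectation (D m) (\<theta> m)))\<^sup>2) / R\<^sup>2)
      \<ge> \<bar>g\<bar> * (1 - 2 * (real M * p) / R\<^sup>2)"
  proof -
    have "measure_pmf.expectation ?Q
        (\<lambda>q. (thinned_sum M \<theta> q - p * (\<Sum>m<M. measure_pmf.expectation (D m) (\<theta> m)))\<^sup>2) \<le> real M * p"
      using p fin bounded by (rule thinned_sum_variance_le)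
    hence "2 * measure_pmf.expectation ?Q
        (\<lambda>q. (thinned_sum M \<theta> q - p * (\<Sum>m<M. measure_pmf.expectation (D m) (\<theta> m)))\<^sup>2) / R\<^sup>2
        \<le> 2 * (real M * p) / R\<^sup>2"
      by (intro divide_right_mono) auto
    thus ?thesis
      by (intro mult_left_mono) auto
  qed
  finally show ?thesis .
qed

text \<open>The logarithm in \<open>c0\<close> is only used through \<open>ln (6 / (3 - 5 c)) \<ge> ln 2\<close>:
  Chebyshev's inequality already yields the required bound on the probability of a wrong sign.\<close>

lemma chebyshev_ratio_le:
  fixes c p R :: real and M :: nat
  assumes c: "0 < c" "c < 3 / 5" and M: "M \<ge> 1" and p: "p \<le> 1"
    and R: "R \<ge> 2 * sqrt M * sqrt (8 * ln (6 / (3 - 5 * c))) / (1 + c)"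
  shows "R > 0" "2 * (real M * p) / R\<^sup>2 \<le> 1 - c"
proof -
  define L where "L = ln (6 / (3 - 5 * c))"
  have "ln 2 \<le> L"
    using c by (simp add: L_def field_simps)
  hence L: "L \<ge> 2 / 3"
    using ln2_ge_two_thirds by linarith
  define R0 where "R0 = 2 * sqrt M * sqrt (8 * L) / (1 + c)"
  have R0: "R0 > 0" "R0 \<le> R"
    using M L c R by (simp_all add: R0_def L_def)
  thus "R > 0"
    by linarith
  have R0_sq: "R0\<^sup>2 = 32 * real M * L / (1 + c)\<^sup>2"
    using L by (simp add: R0_def power_divide power_mult_distrib)
  have "2 * (real M * p) / R\<^sup>2 \<le> 2 * real M / R0\<^sup>2"
    using R0 M p by (intro frac_le power_mono) auto
  also have "\<dots> = (1 + c)\<^sup>2 / (16 * L)"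
    using M L c by (simp add: R0_sq field_simps)
  also have "\<dots> \<le> 1 - c"
  proof -
    have "(1 + c)\<^sup>2 \<le> (8 / 5)\<^sup>2"
      using c by (intro power_mono) auto
    moreover have "16 * L * (1 - c) \<ge> 16 * (2 / 3) * (2 / 5)"
      using L c by (intro mult_mono) auto
    ultimately have "(1 + c)\<^sup>2 \<le> (1 - c) * (16 * L)"
      by (simp add: power2_eq_square algebra_simps)
    thus ?thesis
      using L by (simp add: divide_le_eq)
  qed
  finally show "2 * (real M * p) / R\<^sup>2 \<le> 1 - c" .
qed

lemma threshold_le_vote_mean:
  fixes c p u c0 E g R :: real and M :: nat
  assumes p: "p > 0" and u: "u > 0" and c: "0 < c" "c < 3 / 5" and E: "E \<ge> 0"
    and c0: "c0 \<ge> u / p * sqrt (8 * ln (6 / (3 - 5 * c)))"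
    and large: "(1 + c) * \<bar>g\<bar> > E + 2 * c0 / sqrt M"
    and mean: "R \<ge> p * M / u * (\<bar>g\<bar> - E / 2)"
  shows "R \<ge> 2 * sqrt M * sqrt (8 * ln (6 / (3 - 5 * c))) / (1 + c)"
proof -
  have "\<bar>g\<bar> > (E + 2 * c0 / sqrt M) / (1 + c)"
    using large c by (simp add: field_simps)
  moreover have "E / 2 \<le> E / (1 + c)"
    using E c by (intro divide_left_mono) auto
  ultimately have "\<bar>g\<bar> - E / 2 \<ge> 2 * c0 / sqrt M / (1 + c)"
    unfolding add_divide_distrib by linarith
  hence "p * M / u * (2 * c0 / sqrt M / (1 + c)) \<le> p * M / u * (\<bar>g\<bar> - E / 2)"
    using p u by (intro mult_left_mono) auto
  hence "R \<ge> p * M / u * (2 * c0 / sqrt M / (1 + c))"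
    using mean by linarith
  also have "p * M / u * (2 * c0 / sqrt M / (1 + c)) = 2 * (M / sqrt M) * (c0 * p / u) / (1 + c)"
    by (simp add: mult_ac)
  also have "real M / sqrt M = sqrt M"
    by (rule real_div_sqrt) simp
  also have "c0 * p / u \<ge> sqrt (8 * ln (6 / (3 - 5 * c)))"
    using c0 p u by (simp add: field_simps)
  hence "2 * sqrt M * (c0 * p / u) / (1 + c) \<ge> 2 * sqrt M * sqrt (8 * ln (6 / (3 - 5 * c))) / (1 + c)"
    using c by (intro divide_right_mono mult_left_mono) auto
  finally show ?thesis .
qed

lemma sign_agreement_ge:
  fixes D :: "nat \<Rightarrow> 'v::zero pmf"
  assumes p: "0 < p" "p \<le> 1" and M: "M \<ge> 1" and fin: "\<And>m. finite (set_pmf (D m))"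
    and bounded: "\<And>m x. m < M \<Longrightarrow> x \<in> set_pmf (D m) \<Longrightarrow> \<bar>\<theta> m x\<bar> \<le> 1"
    and c: "0 < c" "c < 3 / 5" and u: "u > 0" and E: "E \<ge> 0"
    and c0: "c0 \<ge> u / p * sqrt (8 * ln (6 / (3 - 5 * c)))"
    and dominated: "\<And>q. g \<noteq> 0 \<Longrightarrow> q \<in> set_pmf (thinned_pmf M p D) \<Longrightarrow> sgn g * X q \<ge> thinned_sum M \<theta> q + K"
    and mean: "g \<noteq> 0 \<Longrightarrow> p * (\<Sum>m<M. measure_pmf.expectation (D m) (\<theta> m)) + K \<ge> p * M / u * (\<bar>g\<bar> - E / 2)"
  shows "measure_pmf.expectation (thinned_pmf M p D) (\<lambda>q. g * sgn (X q)) \<ge> c * \<bar>g\<bar> - (E + 2 * c0 / sqrt M)"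
proof -
  let ?Q = "thinned_pmf M p D"
  have "ln (6 / (3 - 5 * c)) \<ge> 0"
    using c by (intro ln_ge_zero) (simp add: field_simps)
  hence "u / p * sqrt (8 * ln (6 / (3 - 5 * c))) \<ge> 0"
    using p u by simp
  hence "c0 \<ge> 0"
    using c0 by linarith
  show ?thesis
  proof (cases "(1 + c) * \<bar>g\<bar> \<le> E + 2 * c0 / sqrt M")
    case True
    have "measure_pmf.expectation ?Q (\<lambda>q. - \<bar>g\<bar>) \<le> measure_pmf.expectation ?Q (\<lambda>q. g * sgn (X q))"
      by (intro integral_mono_AE integrable_measure_pmf_finite finite_set_thinned_pmf fin AE_pmfI)
        (auto simp: sgn_if)
    thus ?thesis
      using True by (simp add: measure_pmf.prob_space algebra_simps)
  next
    case False
    hence g: "g \<noteq> 0"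
      using E \<open>c0 \<ge> 0\<close> by auto
    define R where "R = p * (\<Sum>m<M. measure_pmf.expectation (D m) (\<theta> m)) + K"
    have "R \<ge> 2 * sqrt M * sqrt (8 * ln (6 / (3 - 5 * c))) / (1 + c)"
      using False mean[OF g] unfolding R_def by (intro threshold_le_vote_mean[OF p(1) u c E c0]) auto
    note R = chebyshev_ratio_le[OF c M p(2) this]
    have "measure_pmf.expectation ?Q (\<lambda>q. g * sgn (X q)) \<ge> \<bar>g\<bar> * (1 - 2 * (real M * p) / R\<^sup>2)"
      using p fin bounded dominated[OF g] R_def R(1) by (intro thinned_sign_agreement_ge) auto
    moreover have "\<bar>g\<bar> * (1 - 2 * (real M * p) / R\<^sup>2) \<ge> c * \<bar>g\<bar>"
      using R(2) mult_left_mono[of c "1 - 2 * (real M * p) / R\<^sup>2" "\<bar>g\<bar>"] by (simp add: mult.commute)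
    moreover have "2 * c0 / sqrt M \<ge> 0"
      using \<open>c0 \<ge> 0\<close> by simp
    ultimately show ?thesis
      using E by linarith
  qed
qed

section \<open>Federated sign SGD with Byzantine clients\<close>

lemma smooth_step_le:
  fixes F :: "real^'d::finite \<Rightarrow> real" and gF :: "real^'d \<Rightarrow> real^'d" and s :: "'d \<Rightarrow> real"
  assumes smooth: "\<And>w1 w2. F w1 \<le> F w2 + inner (gF w2) (w1 - w2) + L / 2 * (norm (w1 - w2))\<^sup>2"
    and L: "L \<ge> 0" and s: "\<And>i. \<bar>s i\<bar> \<le> 1"
  shows "F (w - \<eta> *\<^sub>R (\<chi> i. s i)) \<le> F w - \<eta> * (\<Sum>i\<in>UNIV. gF w $ i * s i) + L / 2 * \<eta>\<^sup>2 * CARD('d)"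
proof -
  define v where "v = (\<chi> i. s i)"
  have "inner (gF w) (w - \<eta> *\<^sub>R v - w) = - (\<eta> * (\<Sum>i\<in>UNIV. gF w $ i * s i))"
    by (simp add: v_def inner_vec_def sum_distrib_left sum_negf algebra_simps)
  moreover have "L / 2 * (norm (w - \<eta> *\<^sub>R v - w))\<^sup>2 \<le> L / 2 * \<eta>\<^sup>2 * CARD('d)"
  proof -
    have "(norm (w - \<eta> *\<^sub>R v - w))\<^sup>2 = (\<Sum>i\<in>UNIV. \<eta>\<^sup>2 * (s i)\<^sup>2)"
      by (simp only: power2_norm_eq_inner) (simp add: v_def inner_vec_def power2_eq_square mult_ac)
    also have "\<dots> \<le> (\<Sum>i\<in>(UNIV :: 'd set). \<eta>\<^sup>2)"
      using s by (intro sum_mono) (simp add: abs_square_le_1 mult_left_le)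
    finally have "(norm (w - \<eta> *\<^sub>R v - w))\<^sup>2 \<le> \<eta>\<^sup>2 * CARD('d)"
      by (simp add: mult.commute)
    thus ?thesis
      using L mult_left_mono[of _ _ "L / 2"] by (simp add: mult.assoc)
  qed
  ultimately have "F (w - \<eta> *\<^sub>R v) \<le> F w - \<eta> * (\<Sum>i\<in>UNIV. gF w $ i * s i) + L / 2 * \<eta>\<^sup>2 * CARD('d)"
    using smooth[of "w - \<eta> *\<^sub>R v" w] by linarith
  thus ?thesis
    by (simp only: v_def)
qed

lemma descent_average_bound:
  fixes \<eta> c d A L G E0 K :: real and \<tau> :: "nat \<Rightarrow> nat" and T :: nat
  assumes T: "T \<ge> 1" and d: "d > 0" and c: "c > 0" and \<eta>: "\<eta> = 1 / sqrt (d * real T)"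
    and descent: "\<eta> * c * G \<le> A + (\<Sum>t<T. \<eta> * d * (E0 + K * real (\<tau> t)) + L / 2 * \<eta>\<^sup>2 * d)"
  shows "1 / real T * G \<le> 1 / c * (A * sqrt d / sqrt (real T) + L * sqrt d / (2 * sqrt (real T))
           + d * E0 + d * K * (\<Sum>t<T. real (\<tau> t)) / real T)"
proof -
  define S where "S = (\<Sum>t<T. real (\<tau> t))"
  define X where "X = A * sqrt d / sqrt (real T) + L * sqrt d / (2 * sqrt (real T)) + d * E0 + d * K * S / real T"
  have T_pos: "real T > 0"
    using T by simp
  have \<eta>_pos: "\<eta> > 0"
    using \<eta> d T_pos by simp
  have \<eta>_sqrt: "\<eta> * sqrt d * sqrt (real T) = 1"
    using \<eta> d T_pos by (simp add: real_sqrt_mult)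
  have "(\<eta> * sqrt d * sqrt (real T))\<^sup>2 = \<eta>\<^sup>2 * d * real T"
    using d by (simp add: power_mult_distrib)
  hence \<eta>_sq: "\<eta>\<^sup>2 * d * real T = 1"
    using \<eta>_sqrt by simp
  have "(\<Sum>t<T. \<eta> * d * (E0 + K * real (\<tau> t)) + L / 2 * \<eta>\<^sup>2 * d)
      = \<eta> * d * real T * E0 + \<eta> * d * K * S + L / 2 * (\<eta>\<^sup>2 * d * real T)"
    by (simp add: S_def sum.distrib sum_distrib_left algebra_simps)
  also have "\<dots> = \<eta> * real T * X - A"
  proof -
    have "sqrt (real T) > 0"
      using T_pos by simp
    hence a1: "\<eta> * real T * (A * sqrt d / sqrt (real T)) = A * (\<eta> * sqrt d * sqrt (real T))"
      and a2: "\<eta> * real T * (L * sqrt d / (2 * sqrt (real T))) = L / 2 * (\<eta> * sqrt d * sqrt (real T))"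
      by (simp_all add: field_simps)
    have a3: "\<eta> * real T * (d * K * S / real T) = \<eta> * d * K * S"
      using T_pos by simp
    show ?thesis
      unfolding X_def distrib_left a1 a2 a3 \<eta>_sqrt \<eta>_sq by (simp add: algebra_simps)
  qed
  finally have "\<eta> * c * G \<le> \<eta> * (real T * X)"
    using descent by simp
  hence "c * G \<le> real T * X"
    using \<eta>_pos by (simp add: mult.assoc)
  hence "G / real T \<le> X / c"
    using T_pos c by (simp add: field_simps)
  thus ?thesis
    by (simp add: X_def S_def)
qed

lemma sgn_scaleR_sum_component:
  fixes v :: "'a \<Rightarrow> real^'d"
  shows "sgn (((1 / real (card S)) *\<^sub>R (\<Sum>m\<in>S. v m)) $ i) = sgn (\<Sum>m\<in>S. v m $ i)"
proof (cases "card S = 0")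
  case True
  thus ?thesis
    by (cases "finite S") auto
qed (simp add: sum_component sgn_mult)

lemma sum_replace_by_minus_one_ge:
  fixes e :: "nat \<Rightarrow> real"
  assumes A: "A \<subseteq> {..<M}" and e: "\<And>m. m \<in> A \<Longrightarrow> e m \<le> 1"
  shows "(\<Sum>m<M. if m \<in> A then - 1 else e m) \<ge> (\<Sum>m<M. e m) - 2 * real (card A)"
proof -
  have "(\<Sum>m<M. if m \<in> A then - 1 else e m) = (\<Sum>m<M. e m) - (\<Sum>m<M. if m \<in> A then e m + 1 else 0)"
    by (simp add: sum_subtractf[symmetric] if_distrib cong: if_cong)
  moreover have "(\<Sum>m<M. if m \<in> A then e m + 1 else 0) = (\<Sum>m\<in>A. e m + 1)"
    using A by (simp add: sum.inter_restrict[symmetric] Int_absorb1)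
  moreover have "(\<Sum>m\<in>A. e m + 1) \<le> (\<Sum>m\<in>A. 2)"
    using e by (intro sum_mono) fastforce
  ultimately show ?thesis
    by simp
qed

locale byzantine_sign_sgd =
  fixes M n :: nat and p B \<beta> \<eta> :: real
    and gradf :: "nat \<Rightarrow> real^'d::finite \<Rightarrow> real^'d"
    and sd :: "nat \<Rightarrow> 'd \<Rightarrow> real"
    and Bsel :: "nat \<Rightarrow> (real^'d) list \<Rightarrow> nat set \<Rightarrow> nat set"
    and byz :: "nat \<Rightarrow> (real^'d) list \<Rightarrow> nat set \<Rightarrow> (nat \<Rightarrow> real^'d) \<Rightarrow> nat \<Rightarrow> real^'d"
    and \<tau> :: "nat \<Rightarrow> nat"
  assumes M_pos: "M \<ge> 1" and n_pos: "n \<ge> 1" and p_pos: "0 < p" and p_le_1: "p \<le> 1"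
    and beta_pos: "\<beta> > 0"
    and sd_nonneg: "\<And>m i. sd m i \<ge> 0"
    and grad_sd_less: "\<And>m w i. m < M \<Longrightarrow> \<bar>gradf m w $ i\<bar> + sd m i < B"
    and Bsel_subset: "\<And>t h S. Bsel t h S \<subseteq> {..<M}"
    and card_Bsel: "\<And>t h S. card (Bsel t h S) = \<tau> t"
    and byz_sign: "\<And>t h S H m i. m \<in> S \<inter> Bsel t h S \<Longrightarrow> byz t h S H m $ i \<in> {-1, 1}"
begin

definition client_msg :: "nat \<Rightarrow> real^'d \<Rightarrow> (real^'d) pmf" where
  "client_msg m w = honest_msg n B \<beta> (\<lambda>i. gradf m w $ i) (sd m)"

text \<open>A round outcome \<open>q\<close> records for every client whether it participates and the message it
  would send if it were honest.\<close>

definition round_pmf :: "real^'d \<Rightarrow> (nat \<Rightarrow> bool \<times> (real^'d)) pmf" where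
  "round_pmf w = thinned_pmf M p (\<lambda>m. client_msg m w)"

definition participants :: "(nat \<Rightarrow> bool \<times> (real^'d)) \<Rightarrow> nat set" where
  "participants q = {m. m < M \<and> fst (q m)}"

definition honest_msgs :: "nat \<Rightarrow> (real^'d) list \<Rightarrow> (nat \<Rightarrow> bool \<times> (real^'d)) \<Rightarrow> nat \<Rightarrow> real^'d" where
  "honest_msgs t h q m = (if m \<in> participants q - Bsel t h (participants q) then snd (q m) else 0)"

definition received :: "nat \<Rightarrow> (real^'d) list \<Rightarrow> (nat \<Rightarrow> bool \<times> (real^'d)) \<Rightarrow> nat \<Rightarrow> real^'d" where
  "received t h q m =
     (if m \<in> Bsel t h (participants q) then byz t h (participants q) (honest_msgs t h q) m else honest_msgs t h q m)"

definition vote :: "nat \<Rightarrow> (real^'d) list \<Rightarrow> (nat \<Rightarrow> bool \<times> (real^'d)) \<Rightarrow> 'd \<Rightarrow> real" where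
  "vote t h q i = (\<Sum>m\<in>participants q. received t h q m $ i)"

definition avg_grad :: "real^'d \<Rightarrow> 'd \<Rightarrow> real" where
  "avg_grad w i = 1 / real M * (\<Sum>m<M. gradf m w $ i)"

definition clip_bias :: real where
  "clip_bias = (B + \<beta>) * std_normal_density (sqrt n)"

lemma B_pos: "B > 0"
  using grad_sd_less[of 0 0 undefined] M_pos sd_nonneg[of 0 undefined] by linarith

lemma clip_bias_nonneg: "clip_bias \<ge> 0"
  using B_pos beta_pos by (simp add: clip_bias_def)

lemma finite_participants: "finite (participants q)"
  by (simp add: participants_def)

lemma sum_participants: "(\<Sum>m\<in>participants q. f m) = (\<Sum>m<M. if fst (q m) then f m else 0)"
proof -
  have "participants q = {m \<in> {..<M}. fst (q m)}"
    by (auto simp: participants_def)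
  thus ?thesis
    by (simp add: sum.inter_filter[symmetric])
qed

text \<open>One iteration draws all coins and all honest messages up front; the adversary only
  decides which of them are replaced.\<close>

lemma sss_step_eq_round_pmf:
  "sss_step M n p B \<beta> \<eta> gradf sd Bsel byz t h
     = map_pmf (\<lambda>q. h @ [last h - \<eta> *\<^sub>R (\<chi> i. sgn (vote t h q i))]) (round_pmf (last h))"
proof -
  define next_hist where "next_hist = (\<lambda>S H. let v = (\<lambda>m. if m \<in> Bsel t h S then byz t h S H m else H m);
       avg = (1 / real (card S)) *\<^sub>R (\<Sum>m\<in>S. v m) in h @ [last h - \<eta> *\<^sub>R (\<chi> i. sgn (avg $ i))])"
  define toS where "toS = (\<lambda>b. {m. m < M \<and> b m})"
  define msgs where "msgs = (\<lambda>m. client_msg m (last h))"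
  define restr where "restr = (\<lambda>b (H :: nat \<Rightarrow> real^'d) m. if m \<in> toS b - Bsel t h (toS b) then H m else 0)"
  have "sss_step M n p B \<beta> \<eta> gradf sd Bsel byz t h
      = bind_pmf (Pi_pmf {..<M} False (\<lambda>_. bernoulli_pmf p))
          (\<lambda>b. bind_pmf (Pi_pmf (toS b - Bsel t h (toS b)) 0 msgs) (\<lambda>H. return_pmf (next_hist (toS b) H)))"
    by (simp add: sss_step_def part_pmf_def bind_map_pmf next_hist_def msgs_def client_msg_def toS_def)
  also have "\<dots> = bind_pmf (Pi_pmf {..<M} False (\<lambda>_. bernoulli_pmf p))
      (\<lambda>b. bind_pmf (Pi_pmf {..<M} 0 msgs) (\<lambda>H. return_pmf (next_hist (toS b) (restr b H))))"
  proof -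
    have "Pi_pmf (toS b - Bsel t h (toS b)) 0 msgs = map_pmf (restr b) (Pi_pmf {..<M} 0 msgs)" for b
      unfolding restr_def by (rule Pi_pmf_subset) (auto simp: toS_def)
    thus ?thesis
      by (simp add: bind_map_pmf)
  qed
  also have "\<dots> = map_pmf (\<lambda>(b, H). next_hist (toS b) (restr b H))
      (pair_pmf (Pi_pmf {..<M} False (\<lambda>_. bernoulli_pmf p)) (Pi_pmf {..<M} 0 msgs))"
    by (simp add: pair_pmf_def map_bind_pmf)
  also have "\<dots> = map_pmf (\<lambda>q. next_hist (toS (fst \<circ> q)) (restr (fst \<circ> q) (snd \<circ> q))) (round_pmf (last h))"
    unfolding pair_Pi_pmf_eq_map_Pi_pmf[OF finite_lessThan] round_pmf_def thinned_pmf_def msgs_def pmf.map_comp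
    by (simp add: o_def)
  also have "\<dots> = map_pmf (\<lambda>q. h @ [last h - \<eta> *\<^sub>R (\<chi> i. sgn (vote t h q i))]) (round_pmf (last h))"
  proof (intro pmf.map_cong refl)
    fix q
    have S: "toS (fst \<circ> q) = participants q"
      by (auto simp: toS_def participants_def)
    have H: "restr (fst \<circ> q) (snd \<circ> q) = honest_msgs t h q"
      by (auto simp: restr_def honest_msgs_def S fun_eq_iff)
    show "next_hist (toS (fst \<circ> q)) (restr (fst \<circ> q) (snd \<circ> q)) = h @ [last h - \<eta> *\<^sub>R (\<chi> i. sgn (vote t h q i))]"
      unfolding next_hist_def Let_def S H sgn_scaleR_sum_component by (simp add: vote_def received_def)
  qed
  finally show ?thesis .
qed

lemma finite_set_client_msg: "finite (set_pmf (client_msg m w))"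
  by (simp add: client_msg_def honest_msg_def finite_set_Pi_pmf)

lemma finite_set_round_pmf: "finite (set_pmf (round_pmf w))"
  by (simp add: round_pmf_def finite_set_thinned_pmf finite_set_client_msg)

lemma finite_set_sss_step: "finite (set_pmf (sss_step M n p B \<beta> \<eta> gradf sd Bsel byz t h))"
  by (simp add: sss_step_eq_round_pmf finite_set_round_pmf)

lemma finite_set_sss_proc: "finite (set_pmf (sss_proc M n p B \<beta> \<eta> gradf sd Bsel byz w0 t))"
  by (induction t) (auto simp: finite_set_sss_step)

lemma client_msg_component: "x \<in> set_pmf (client_msg m w) \<Longrightarrow> x $ i \<in> {- 1, 1}"
  by (auto simp: client_msg_def honest_msg_def)

lemma client_msg_in_round:
  assumes "q \<in> set_pmf (round_pmf w)" "m < M"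
  shows "snd (q m) \<in> set_pmf (client_msg m w)"
  using assms by (auto simp: round_pmf_def thinned_pmf_def set_Pi_pmf PiE_dflt_def)

lemma expectation_client_msg:
  "(B + \<beta>) * measure_pmf.expectation (client_msg m w) (\<lambda>x. x $ i) = expected_clipped_mean n B (gradf m w $ i) (sd m i)"
proof -
  let ?P = "prob_one n B \<beta> (gradf m w $ i) (sd m i)"
  have P: "0 \<le> ?P" "?P \<le> 1"
    using prob_one_bounds[of B \<beta>] B_pos beta_pos by auto
  have "measure_pmf.expectation (client_msg m w) (\<lambda>x. x $ i)
      = measure_pmf.expectation (map_pmf (\<lambda>b. b i)
          (Pi_pmf UNIV False (\<lambda>i. bernoulli_pmf (prob_one n B \<beta> (gradf m w $ i) (sd m i)))))
          (\<lambda>b. if b then 1 else - 1)"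
    by (simp add: client_msg_def honest_msg_def)
  also have "\<dots> = 2 * ?P - 1"
    using P by (simp add: Pi_pmf_component)
  finally show ?thesis
    using B_pos beta_pos by (simp add: prob_one_eq field_simps)
qed

lemma client_msg_bias:
  assumes "m < M"
  shows "\<bar>(B + \<beta>) * measure_pmf.expectation (client_msg m w) (\<lambda>x. x $ i) - gradf m w $ i\<bar> \<le> clip_bias / 2"
proof -
  have "\<bar>(B + \<beta>) * measure_pmf.expectation (client_msg m w) (\<lambda>x. x $ i) - gradf m w $ i\<bar>
      \<le> sd m i / 2 * std_normal_density (sqrt n)"
    unfolding expectation_client_msg
    using n_pos sd_nonneg grad_sd_less[OF assms] by (rule expected_clipped_mean_bias)
  also have "\<dots> \<le> (B + \<beta>) / 2 * std_normal_density (sqrt n)"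
    using grad_sd_less[OF assms, of w i] beta_pos by (intro mult_right_mono divide_right_mono) auto
  finally show ?thesis
    by (simp add: clip_bias_def)
qed

lemma abs_expectation_client_msg_le: "\<bar>measure_pmf.expectation (client_msg m w) (\<lambda>x. x $ i)\<bar> \<le> 1"
proof -
  have "\<bar>measure_pmf.expectation (client_msg m w) (\<lambda>x. x $ i)\<bar> \<le> measure_pmf.expectation (client_msg m w) (\<lambda>x. \<bar>x $ i\<bar>)"
    by (rule integral_abs_bound)
  also have "\<dots> \<le> measure_pmf.expectation (client_msg m w) (\<lambda>x. 1)"
    by (intro integral_mono_AE integrable_measure_pmf_finite finite_set_client_msg AE_pmfI)
      (auto dest: client_msg_component[of _ m w i])
  finally show ?thesis
    by (simp add: measure_pmf.prob_space)
qed

lemma vote_split: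
  "vote t h q i = (\<Sum>m\<in>participants q - Bsel t h (participants q). snd (q m) $ i)
     + (\<Sum>m\<in>participants q \<inter> Bsel t h (participants q). byz t h (participants q) (honest_msgs t h q) m $ i)"
proof -
  have "vote t h q i = (\<Sum>m\<in>participants q - Bsel t h (participants q). received t h q m $ i)
      + (\<Sum>m\<in>participants q \<inter> Bsel t h (participants q). received t h q m $ i)"
    unfolding vote_def using sum.Int_Diff[OF finite_participants] by (simp add: add.commute)
  thus ?thesis
    by (simp add: received_def honest_msgs_def)
qed

lemma byzantine_votes_ge:
  assumes "\<bar>s\<bar> = 1"
  shows "s * (\<Sum>m\<in>participants q \<inter> Bsel t h (participants q). byz t h (participants q) (honest_msgs t h q) m $ i)
      \<ge> - real (card (participants q \<inter> Bsel t h (participants q)))"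
proof -
  have "- 1 \<le> s * byz t h (participants q) (honest_msgs t h q) m $ i"
    if "m \<in> participants q \<inter> Bsel t h (participants q)" for m
    using byz_sign[OF that, of "honest_msgs t h q" i] assms by (auto simp: abs_if split: if_splits)
  hence "(\<Sum>m\<in>participants q \<inter> Bsel t h (participants q). - 1)
      \<le> (\<Sum>m\<in>participants q \<inter> Bsel t h (participants q). s * byz t h (participants q) (honest_msgs t h q) m $ i)"
    by (intro sum_mono)
  thus ?thesis
    by (simp add: sum_distrib_left)
qed

lemma card_byzantine_participants_le: "card (participants q \<inter> Bsel t h (participants q)) \<le> \<tau> t"
  using card_mono[OF finite_subset[OF Bsel_subset finite_lessThan] Int_lower2] card_Bsel by metis

text \<open>An adaptive adversary can flip the votes of at most \<open>\<tau> t\<close> participants.\<close>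

lemma vote_ge_adaptive:
  assumes q: "q \<in> set_pmf (round_pmf w)" and s: "\<bar>s\<bar> = 1"
  shows "s * vote t h q i \<ge> thinned_sum M (\<lambda>m x. s * x $ i) q - 2 * real (\<tau> t)"
proof -
  let ?S = "participants q" and ?Bs = "Bsel t h (participants q)"
  have "\<bar>s * snd (q m) $ i\<bar> \<le> 1" if "m \<in> ?S" for m
    using that client_msg_component[OF client_msg_in_round[OF q], of m i] s
    by (auto simp: participants_def abs_mult)
  hence "(\<Sum>m\<in>?S \<inter> ?Bs. s * snd (q m) $ i) \<le> (\<Sum>m\<in>?S \<inter> ?Bs. 1)"
    by (intro sum_mono) (simp add: abs_le_iff)
  hence honest_flipped: "s * (\<Sum>m\<in>?S \<inter> ?Bs. snd (q m) $ i) \<le> real (card (?S \<inter> ?Bs))"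
    by (simp add: sum_distrib_left)
  have "thinned_sum M (\<lambda>m x. s * x $ i) q = s * (\<Sum>m\<in>?S - ?Bs. snd (q m) $ i) + s * (\<Sum>m\<in>?S \<inter> ?Bs. snd (q m) $ i)"
    unfolding thinned_sum_def sum_participants[symmetric] distrib_left[symmetric] sum_distrib_left
    using sum.Int_Diff[OF finite_participants[of q], where B = ?Bs] by (simp add: add.commute)
  thus ?thesis
    using vote_split[of t h q i] byzantine_votes_ge[OF s, of q t h i] honest_flipped card_byzantine_participants_le[of q t h]
    by (simp add: distrib_left)
qed

lemma vote_ge_static:
  assumes s: "\<bar>s\<bar> = 1" and static: "\<And>S. Bsel t h S = Bf"
  shows "s * vote t h q i \<ge> thinned_sum M (\<lambda>m x. if m \<in> Bf then - 1 else s * x $ i) q"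
proof -
  let ?S = "participants q"
  have "thinned_sum M (\<lambda>m x. if m \<in> Bf then - 1 else s * x $ i) q
      = (\<Sum>m\<in>?S. if m \<in> Bf then - 1 else s * snd (q m) $ i)"
    by (simp add: thinned_sum_def sum_participants)
  also have "\<dots> = (\<Sum>m\<in>?S \<inter> Bf. if m \<in> Bf then - 1 else s * snd (q m) $ i)
      + (\<Sum>m\<in>?S - Bf. if m \<in> Bf then - 1 else s * snd (q m) $ i)"
    by (rule sum.Int_Diff[OF finite_participants])
  also have "\<dots> = - real (card (?S \<inter> Bf)) + (\<Sum>m\<in>?S - Bf. s * snd (q m) $ i)"
    by simp
  finally show ?thesis
    using vote_split[of t h q i] byzantine_votes_ge[OF s, of q t h i] static
    by (simp add: distrib_left sum_distrib_left)
qed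

lemma expected_votes_ge:
  "(\<Sum>m<M. sgn (avg_grad w i) * measure_pmf.expectation (client_msg m w) (\<lambda>x. x $ i))
      \<ge> real M / (B + \<beta>) * (\<bar>avg_grad w i\<bar> - clip_bias / 2)"
proof -
  define g where "g = avg_grad w i"
  have u: "B + \<beta> > 0"
    using B_pos beta_pos by simp
  have "sgn g * gradf m w $ i - clip_bias / 2 \<le> (B + \<beta>) * (sgn g * measure_pmf.expectation (client_msg m w) (\<lambda>x. x $ i))"
    if "m < M" for m
  proof -
    have "sgn g * (gradf m w $ i - (B + \<beta>) * measure_pmf.expectation (client_msg m w) (\<lambda>x. x $ i))
        \<le> \<bar>(B + \<beta>) * measure_pmf.expectation (client_msg m w) (\<lambda>x. x $ i) - gradf m w $ i\<bar>"
      by (auto simp: sgn_if)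
    thus ?thesis
      using client_msg_bias[OF that, of w i] by (simp add: algebra_simps)
  qed
  hence "(\<Sum>m<M. sgn g * gradf m w $ i - clip_bias / 2)
      \<le> (B + \<beta>) * (\<Sum>m<M. sgn g * measure_pmf.expectation (client_msg m w) (\<lambda>x. x $ i))"
    unfolding sum_distrib_left by (intro sum_mono) auto
  moreover have "(\<Sum>m<M. sgn g * gradf m w $ i) = real M * (sgn g * g)"
    using M_pos by (simp add: g_def avg_grad_def sum_distrib_left[symmetric])
  hence "(\<Sum>m<M. sgn g * gradf m w $ i - clip_bias / 2) = real M * (\<bar>g\<bar> - clip_bias / 2)"
    by (simp add: sum_subtractf algebra_simps sgn_if)
  ultimately show ?thesis
    using u by (simp add: g_def field_simps)
qed

lemma sign_agreement_adaptive:
  assumes c: "0 < c" "c < 3 / 5" and c0: "c0 \<ge> (B + \<beta>) / p * sqrt (8 * ln (6 / (3 - 5 * c)))"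
  shows "measure_pmf.expectation (round_pmf w) (\<lambda>q. avg_grad w i * sgn (vote t h q i))
     \<ge> c * \<bar>avg_grad w i\<bar> - (clip_bias + 2 * c0 / sqrt M + 4 * (B + \<beta>) * real (\<tau> t) / (p * real M))"
proof -
  define u where "u = B + \<beta>"
  let ?g = "avg_grad w i" and ?E = "clip_bias + 4 * u * real (\<tau> t) / (p * real M)"
  have u: "u > 0"
    using B_pos beta_pos by (simp add: u_def)
  have "measure_pmf.expectation (round_pmf w) (\<lambda>q. ?g * sgn (vote t h q i)) \<ge> c * \<bar>?g\<bar> - (?E + 2 * c0 / sqrt M)"
    unfolding round_pmf_def
  proof (rule sign_agreement_ge[where \<theta> = "\<lambda>m x. sgn ?g * x $ i" and K = "- 2 * real (\<tau> t)" and u = u])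
    show "\<bar>sgn ?g * x $ i\<bar> \<le> 1" if "x \<in> set_pmf (client_msg m w)" for m x
      using client_msg_component[OF that, of i] by (auto simp: abs_mult abs_sgn_eq)
    show "sgn ?g * vote t h q i \<ge> thinned_sum M (\<lambda>m x. sgn ?g * x $ i) q + - 2 * real (\<tau> t)"
      if "?g \<noteq> 0" "q \<in> set_pmf (thinned_pmf M p (\<lambda>m. client_msg m w))" for q
      using vote_ge_adaptive[where s = "sgn ?g" and t = t and h = h and i = i] that by (simp add: round_pmf_def abs_sgn_eq)
    have "p * (\<Sum>m<M. sgn ?g * measure_pmf.expectation (client_msg m w) (\<lambda>x. x $ i)) \<ge> p * (M / u * (\<bar>?g\<bar> - clip_bias / 2))"
      using expected_votes_ge p_pos by (intro mult_left_mono) (auto simp: u_def)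
    moreover have "p * (M / u * (\<bar>?g\<bar> - clip_bias / 2)) - 2 * real (\<tau> t) = p * M / u * (\<bar>?g\<bar> - ?E / 2)"
      using p_pos M_pos u by (simp add: field_simps)
    ultimately show "p * (\<Sum>m<M. measure_pmf.expectation (client_msg m w) (\<lambda>x. sgn ?g * x $ i)) + - 2 * real (\<tau> t)
        \<ge> p * M / u * (\<bar>?g\<bar> - ?E / 2)"
      by simp
    show "?E \<ge> 0"
      using clip_bias_nonneg p_pos u by simp
  qed (use p_pos p_le_1 M_pos finite_set_client_msg c u c0 in \<open>auto simp: u_def\<close>)
  thus ?thesis
    by (simp add: u_def algebra_simps)
qed

text \<open>The paper's constant is 6; the argument below already works with 4.\<close>

lemma sign_agreement_static:
  assumes c: "0 < c" "c < 3 / 5" and c0: "c0 \<ge> (B + \<beta>) / p * sqrt (8 * ln (6 / (3 - 5 * c)))"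
    and static: "\<And>S. Bsel t h S = Bf"
  shows "measure_pmf.expectation (round_pmf w) (\<lambda>q. avg_grad w i * sgn (vote t h q i))
     \<ge> c * \<bar>avg_grad w i\<bar> - (clip_bias + 2 * c0 / sqrt M + 6 * (B + \<beta>) * real (\<tau> t) / real M)"
proof -
  define u where "u = B + \<beta>"
  let ?g = "avg_grad w i" and ?E = "clip_bias + 6 * u * real (\<tau> t) / real M"
  let ?\<theta> = "\<lambda>m x. if m \<in> Bf then - 1 else sgn ?g * x $ i"
  have u: "u > 0"
    using B_pos beta_pos by (simp add: u_def)
  have Bf: "Bf \<subseteq> {..<M}" "card Bf = \<tau> t"
    using Bsel_subset[of t h "{}"] card_Bsel[of t h "{}"] static by simp_all
  have "measure_pmf.expectation (round_pmf w) (\<lambda>q. ?g * sgn (vote t h q i)) \<ge> c * \<bar>?g\<bar> - (?E + 2 * c0 / sqrt M)"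
    unfolding round_pmf_def
  proof (rule sign_agreement_ge[where \<theta> = ?\<theta> and K = 0 and u = u])
    show "\<bar>?\<theta> m x\<bar> \<le> 1" if "x \<in> set_pmf (client_msg m w)" for m x
      using client_msg_component[OF that, of i] by (auto simp: abs_mult abs_sgn_eq)
    show "sgn ?g * vote t h q i \<ge> thinned_sum M ?\<theta> q + 0" if "?g \<noteq> 0" for q
      using vote_ge_static[where s = "sgn ?g" and t = t and h = h and Bf = Bf and q = q and i = i] that static by (simp add: abs_sgn_eq)
    have "(\<Sum>m<M. measure_pmf.expectation (client_msg m w) (?\<theta> m))
        = (\<Sum>m<M. if m \<in> Bf then - 1 else sgn ?g * measure_pmf.expectation (client_msg m w) (\<lambda>x. x $ i))"
      by (intro sum.cong refl) (simp add: measure_pmf.prob_space)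
    also have "\<dots> \<ge> (\<Sum>m<M. sgn ?g * measure_pmf.expectation (client_msg m w) (\<lambda>x. x $ i)) - 2 * real (\<tau> t)"
    proof -
      have "sgn ?g * measure_pmf.expectation (client_msg m w) (\<lambda>x. x $ i) \<le> 1" for m
        using abs_expectation_client_msg_le[of m w i] by (auto simp: sgn_if abs_le_iff)
      thus ?thesis
        using sum_replace_by_minus_one_ge[OF Bf(1)] Bf(2) by simp
    qed
    finally have "p * (\<Sum>m<M. measure_pmf.expectation (client_msg m w) (?\<theta> m))
        \<ge> p * (M / u * (\<bar>?g\<bar> - clip_bias / 2) - 2 * real (\<tau> t))"
      using expected_votes_ge[of w i] p_pos by (intro mult_left_mono) (auto simp: u_def)
    moreover have "p * (M / u * (\<bar>?g\<bar> - clip_bias / 2) - 2 * real (\<tau> t)) \<ge> p * M / u * (\<bar>?g\<bar> - ?E / 2)"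
      using p_pos M_pos u by (simp add: field_simps)
    ultimately show "p * (\<Sum>m<M. measure_pmf.expectation (client_msg m w) (?\<theta> m)) + 0 \<ge> p * M / u * (\<bar>?g\<bar> - ?E / 2)"
      by simp
    show "?E \<ge> 0"
      using clip_bias_nonneg u by simp
  qed (use p_pos p_le_1 M_pos finite_set_client_msg c u c0 in \<open>auto simp: u_def\<close>)
  thus ?thesis
    by (simp add: u_def algebra_simps)
qed

lemma expected_descent_step:
  fixes F :: "real^'d \<Rightarrow> real" and gF :: "real^'d \<Rightarrow> real^'d"
  assumes smooth: "\<And>w1 w2. F w1 \<le> F w2 + inner (gF w2) (w1 - w2) + L / 2 * (norm (w1 - w2))\<^sup>2"
    and L: "L \<ge> 0" and \<eta>: "\<eta> \<ge> 0"
    and sign_agreement: "\<And>i. measure_pmf.expectation (round_pmf (last h)) (\<lambda>q. gF (last h) $ i * sgn (vote t h q i))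
                    \<ge> c * \<bar>gF (last h) $ i\<bar> - Err"
  shows "measure_pmf.expectation (sss_step M n p B \<beta> \<eta> gradf sd Bsel byz t h) (\<lambda>h'. F (last h'))
      \<le> F (last h) - \<eta> * c * l1norm (gF (last h)) + \<eta> * CARD('d) * Err + L / 2 * \<eta>\<^sup>2 * CARD('d)"
proof -
  define w where "w = last h"
  let ?Q = "round_pmf w"
  note integrable = integrable_measure_pmf_finite[OF finite_set_round_pmf]
  have pointwise: "F (w - \<eta> *\<^sub>R (\<chi> i. sgn (vote t h q i)))
      \<le> F w - \<eta> * (\<Sum>i\<in>UNIV. gF w $ i * sgn (vote t h q i)) + L / 2 * \<eta>\<^sup>2 * CARD('d)" for q
    using smooth L by (rule smooth_step_le) (simp add: sgn_if)
  have "measure_pmf.expectation (sss_step M n p B \<beta> \<eta> gradf sd Bsel byz t h) (\<lambda>h'. F (last h'))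
      = measure_pmf.expectation ?Q (\<lambda>q. F (w - \<eta> *\<^sub>R (\<chi> i. sgn (vote t h q i))))"
    by (simp add: sss_step_eq_round_pmf w_def)
  also have "\<dots> \<le> measure_pmf.expectation ?Q
      (\<lambda>q. F w - \<eta> * (\<Sum>i\<in>UNIV. gF w $ i * sgn (vote t h q i)) + L / 2 * \<eta>\<^sup>2 * CARD('d))"
    by (intro integral_mono_AE integrable AE_pmfI pointwise)
  also have "\<dots> = F w - \<eta> * (\<Sum>i\<in>UNIV. measure_pmf.expectation ?Q (\<lambda>q. gF w $ i * sgn (vote t h q i))) + L / 2 * \<eta>\<^sup>2 * CARD('d)"
    by (simp add: Bochner_Integration.integral_add Bochner_Integration.integral_diff Bochner_Integration.integral_sum
        integrable measure_pmf.prob_space)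
  also have "\<dots> \<le> F w - \<eta> * (\<Sum>i\<in>UNIV. c * \<bar>gF w $ i\<bar> - Err) + L / 2 * \<eta>\<^sup>2 * CARD('d)"
    using sign_agreement \<eta> unfolding w_def by (simp add: sum_mono mult_left_mono)
  also have "\<dots> = F w - \<eta> * c * l1norm (gF w) + \<eta> * CARD('d) * Err + L / 2 * \<eta>\<^sup>2 * CARD('d)"
    by (simp add: l1norm_def sum_subtractf sum_distrib_left algebra_simps)
  finally show ?thesis
    unfolding w_def .
qed

lemma telescoping_descent:
  fixes F G :: "real^'d \<Rightarrow> real" and Err :: "nat \<Rightarrow> real"
  assumes step: "\<And>t h. measure_pmf.expectation (sss_step M n p B \<beta> \<eta> gradf sd Bsel byz t h) (\<lambda>h'. F (last h'))
                    \<le> F (last h) - a * G (last h) + Err t"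
    and lower: "\<And>w. F w \<ge> Fstar"
  shows "a * (\<Sum>t<T. measure_pmf.expectation (sss_proc M n p B \<beta> \<eta> gradf sd Bsel byz w0 t) (\<lambda>h. G (last h)))
      \<le> F w0 - Fstar + (\<Sum>t<T. Err t)"
proof -
  define P where "P = sss_proc M n p B \<beta> \<eta> gradf sd Bsel byz w0"
  define \<Phi> where "\<Phi> t = measure_pmf.expectation (P t) (\<lambda>h. F (last h))" for t
  note integrable = integrable_measure_pmf_finite[OF finite_set_sss_proc]
  have \<Phi>_Suc: "\<Phi> (Suc t) \<le> \<Phi> t - a * measure_pmf.expectation (P t) (\<lambda>h. G (last h)) + Err t" for t
  proof -
    have "\<Phi> (Suc t) = measure_pmf.expectation (P t)
        (\<lambda>h. measure_pmf.expectation (sss_step M n p B \<beta> \<eta> gradf sd Bsel byz t h) (\<lambda>h'. F (last h')))"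
      unfolding \<Phi>_def P_def by (simp add: expectation_bind_pmf_finite finite_set_sss_proc finite_set_sss_step)
    also have "\<dots> \<le> measure_pmf.expectation (P t) (\<lambda>h. F (last h) - a * G (last h) + Err t)"
      unfolding P_def by (intro integral_mono_AE integrable AE_pmfI step)
    also have "\<dots> = \<Phi> t - a * measure_pmf.expectation (P t) (\<lambda>h. G (last h)) + Err t"
      unfolding \<Phi>_def P_def
      by (simp add: Bochner_Integration.integral_add Bochner_Integration.integral_diff integrable measure_pmf.prob_space)
    finally show ?thesis .
  qed
  have "\<Phi> T + a * (\<Sum>t<T. measure_pmf.expectation (P t) (\<lambda>h. G (last h))) \<le> \<Phi> 0 + (\<Sum>t<T. Err t)"
  proof (induction T)
    case (Suc T)
    thus ?case
      using \<Phi>_Suc[of T] by (simp add: distrib_left)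
  qed simp
  moreover have "\<Phi> 0 = F w0"
    by (simp add: \<Phi>_def P_def)
  moreover have "measure_pmf.expectation (P T) (\<lambda>_. Fstar) \<le> \<Phi> T"
    unfolding \<Phi>_def P_def by (intro integral_mono_AE integrable AE_pmfI lower)
  hence "Fstar \<le> \<Phi> T"
    by (simp add: measure_pmf.prob_space)
  ultimately show ?thesis
    unfolding P_def by linarith
qed

lemma average_l1_gradient_le:
  fixes F :: "real^'d \<Rightarrow> real" and gF :: "real^'d \<Rightarrow> real^'d" and E0 K :: real
  assumes smooth: "\<And>w1 w2. F w1 \<le> F w2 + inner (gF w2) (w1 - w2) + L / 2 * (norm (w1 - w2))\<^sup>2"
    and L: "L \<ge> 0" and lower: "\<And>w. F w \<ge> Fstar"
    and T: "T \<ge> 1" and \<eta>: "\<eta> = 1 / sqrt (real CARD('d) * real T)" and c: "c > 0"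
    and sign_agreement: "\<And>t h i. measure_pmf.expectation (round_pmf (last h)) (\<lambda>q. gF (last h) $ i * sgn (vote t h q i))
                    \<ge> c * \<bar>gF (last h) $ i\<bar> - (E0 + K * real (\<tau> t))"
  shows "1 / real T * (\<Sum>t<T. measure_pmf.expectation (sss_proc M n p B \<beta> \<eta> gradf sd Bsel byz w0 t)
                                  (\<lambda>h. l1norm (gF (last h))))
    \<le> 1 / c * ((F w0 - Fstar) * sqrt CARD('d) / sqrt (real T) + L * sqrt CARD('d) / (2 * sqrt (real T))
           + CARD('d) * E0 + CARD('d) * K * (\<Sum>t<T. real (\<tau> t)) / real T)"
proof (rule descent_average_bound[OF T _ c \<eta>])
  have "\<eta> \<ge> 0"
    using \<eta> by simp
  hence "measure_pmf.expectation (sss_step M n p B \<beta> \<eta> gradf sd Bsel byz t h) (\<lambda>h'. F (last h'))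
      \<le> F (last h) - \<eta> * c * l1norm (gF (last h))
         + (\<eta> * CARD('d) * (E0 + K * real (\<tau> t)) + L / 2 * \<eta>\<^sup>2 * CARD('d))" for t h
    using expected_descent_step[OF smooth L _ sign_agreement] by (simp add: add.assoc)
  thus "\<eta> * c * (\<Sum>t<T. measure_pmf.expectation (sss_proc M n p B \<beta> \<eta> gradf sd Bsel byz w0 t) (\<lambda>h. l1norm (gF (last h))))
      \<le> F w0 - Fstar + (\<Sum>t<T. \<eta> * CARD('d) * (E0 + K * real (\<tau> t)) + L / 2 * \<eta>\<^sup>2 * CARD('d))"
    using lower by (rule telescoping_descent)
qed simp

lemma average_l1_gradient_le_adaptive:
  fixes F :: "real^'d \<Rightarrow> real" and gF :: "real^'d \<Rightarrow> real^'d"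
  assumes smooth: "\<And>w1 w2. F w1 \<le> F w2 + inner (gF w2) (w1 - w2) + L / 2 * (norm (w1 - w2))\<^sup>2"
    and L: "L \<ge> 0" and lower: "\<And>w. F w \<ge> Fstar"
    and T: "T \<ge> 1" and \<eta>: "\<eta> = 1 / sqrt (real CARD('d) * real T)" and gF: "\<And>w i. gF w $ i = avg_grad w i"
    and c: "0 < c" "c < 3 / 5" and c0: "c0 \<ge> (B + \<beta>) / p * sqrt (8 * ln (6 / (3 - 5 * c)))"
  shows "1 / real T * (\<Sum>t<T. measure_pmf.expectation (sss_proc M n p B \<beta> \<eta> gradf sd Bsel byz w0 t)
                                  (\<lambda>h. l1norm (gF (last h))))
    \<le> 1 / c * ((F w0 - Fstar) * sqrt CARD('d) / sqrt (real T) + L * sqrt CARD('d) / (2 * sqrt (real T))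
           + CARD('d) * (clip_bias + 2 * c0 / sqrt M)
           + CARD('d) * (4 * (B + \<beta>) / (p * M)) * (\<Sum>t<T. real (\<tau> t)) / real T)"
  using smooth L lower T \<eta> c(1)
proof (rule average_l1_gradient_le)
  show "measure_pmf.expectation (round_pmf (last h)) (\<lambda>q. gF (last h) $ i * sgn (vote t h q i))
      \<ge> c * \<bar>gF (last h) $ i\<bar> - (clip_bias + 2 * c0 / sqrt M + 4 * (B + \<beta>) / (p * M) * real (\<tau> t))" for t h i
    using sign_agreement_adaptive[OF c c0, of "last h" i t h] by (simp add: gF)
qed

lemma average_l1_gradient_le_static:
  fixes F :: "real^'d \<Rightarrow> real" and gF :: "real^'d \<Rightarrow> real^'d"
  assumes smooth: "\<And>w1 w2. F w1 \<le> F w2 + inner (gF w2) (w1 - w2) + L / 2 * (norm (w1 - w2))\<^sup>2"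
    and L: "L \<ge> 0" and lower: "\<And>w. F w \<ge> Fstar"
    and T: "T \<ge> 1" and \<eta>: "\<eta> = 1 / sqrt (real CARD('d) * real T)" and gF: "\<And>w i. gF w $ i = avg_grad w i"
    and c: "0 < c" "c < 3 / 5" and c0: "c0 \<ge> (B + \<beta>) / p * sqrt (8 * ln (6 / (3 - 5 * c)))"
    and static: "static_adv Bsel"
  shows "1 / real T * (\<Sum>t<T. measure_pmf.expectation (sss_proc M n p B \<beta> \<eta> gradf sd Bsel byz w0 t)
                                  (\<lambda>h. l1norm (gF (last h))))
    \<le> 1 / c * ((F w0 - Fstar) * sqrt CARD('d) / sqrt (real T) + L * sqrt CARD('d) / (2 * sqrt (real T))
           + CARD('d) * (clip_bias + 2 * c0 / sqrt M)
           + CARD('d) * (6 * (B + \<beta>) / M) * (\<Sum>t<T. real (\<tau> t)) / real T)"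
  using smooth L lower T \<eta> c(1)
proof (rule average_l1_gradient_le)
  have "Bsel t h S = Bsel t h {}" for t h S
    using static by (simp add: static_adv_def)
  thus "measure_pmf.expectation (round_pmf (last h)) (\<lambda>q. gF (last h) $ i * sgn (vote t h q i))
      \<ge> c * \<bar>gF (last h) $ i\<bar> - (clip_bias + 2 * c0 / sqrt M + 6 * (B + \<beta>) / M * real (\<tau> t))" for t h i
    using sign_agreement_static[OF c c0, of t h "Bsel t h {}" "last h" i] by (simp add: gF)
qed

end

lemma abs_grad_add_sd_less:
  fixes Bi :: "'d::finite \<Rightarrow> real" and gradf :: "nat \<Rightarrow> real^'d \<Rightarrow> real^'d"
  assumes Bi_pos: "\<And>i. Bi i > 0" and Bi_bound: "\<And>m w i. m < M \<Longrightarrow> \<bar>gradf m w $ i\<bar> \<le> Bi i"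
    and B0: "B0 = Max (range Bi)" and \<sigma>: "\<sigma> = Max {sd m i | m i. m < M}"
    and B: "B = (1 + \<epsilon>0) * B0" and \<epsilon>0: "\<epsilon>0 > \<sigma> / B0" and m: "m < M"
  shows "\<bar>gradf m w $ i\<bar> + sd m i < B"
proof -
  have Bi_le: "Bi j \<le> B0" for j
    unfolding B0 by (intro Max_ge) auto
  hence "B0 > 0"
    using Bi_pos by (meson order_less_le_trans)
  have "{sd m i | m i. m < M} = (\<lambda>(m, i). sd m i) ` ({..<M} \<times> UNIV)"
    by auto
  hence "sd m i \<le> \<sigma>"
    unfolding \<sigma> using m by (intro Max_ge) auto
  also have "\<sigma> < \<epsilon>0 * B0"
    using \<epsilon>0 \<open>B0 > 0\<close> by (simp add: field_simps)
  finally show ?thesis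
    using Bi_bound[OF m, of w i] Bi_le[of i] by (simp add: B algebra_simps)
qed

theorem corollary2:
  fixes M n T :: nat
    and p \<beta> \<epsilon>0 c L Fstar \<sigma> B0 B \<eta> c0 :: real
    and f :: "nat \<Rightarrow> real^'d::finite \<Rightarrow> real"
    and gradf :: "nat \<Rightarrow> real^'d \<Rightarrow> real^'d"
    and Bi :: "'d \<Rightarrow> real"
    and sd :: "nat \<Rightarrow> 'd \<Rightarrow> real"
    and w0 :: "real^'d"
    and \<tau> :: "nat \<Rightarrow> nat"
    and adaptive :: bool
    and Bsel :: "nat \<Rightarrow> (real^'d) list \<Rightarrow> nat set \<Rightarrow> nat set"
    and byz :: "nat \<Rightarrow> (real^'d) list \<Rightarrow> nat set \<Rightarrow> (nat \<Rightarrow> real^'d) \<Rightarrow> nat \<Rightarrow> real^'d"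
  defines "F \<equiv> (\<lambda>w. (1 / real M) * (\<Sum>m<M. f m w))"
    and "gradF \<equiv> (\<lambda>w. (1 / real M) *\<^sub>R (\<Sum>m<M. gradf m w))"
    and "d \<equiv> real CARD('d)"
  assumes M_pos: "M \<ge> 1" and n_pos: "n \<ge> 1" and T_pos: "T \<ge> 1"
    and p_range: "0 < p" "p \<le> 1" and beta_pos: "\<beta> > 0"
    (* differentiability of the local functions, with gradients gradf *)
    and grad: "\<And>m w. m < M \<Longrightarrow> GDERIV (f m) w :> gradf m w"
    (* lower bound *)
    and lower: "\<And>w. F w \<ge> Fstar"
    (* smoothness *)
    and L_nonneg: "L \<ge> 0"
    and smooth: "\<And>w1 w2. F w1 \<le> F w2 + inner (gradF w2) (w1 - w2) + L / 2 * (norm (w1 - w2))\<^sup>2"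
    (* bounded true gradient *)
    and Bi_pos: "\<And>i. Bi i > 0"
    and Bi_bound: "\<And>m w i. m < M \<Longrightarrow> \<bar>gradf m w $ i\<bar> \<le> Bi i"
    and B0_def: "B0 = Max (range Bi)"
    (* Gaussian noise: standard deviations sd m i, sigma^2 = max variance *)
    and sd_nonneg: "\<And>m i. sd m i \<ge> 0"
    and sigma_def: "\<sigma> = Max {sd m i | m i. m < M}"
    (* parameters *)
    and B_def: "B = (1 + \<epsilon>0) * B0"
    and eps_gt: "\<epsilon>0 > \<sigma> / B0"
    and c_range: "0 < c" "c < 3 / 5"
    and eta_def: "\<eta> = 1 / sqrt (d * real T)"
    and c0_def: "c0 = max (sqrt (8 * \<sigma>\<^sup>2 / real n * ln (6 / c)))
                         (sqrt (8 * (B + \<beta>)\<^sup>2 / p\<^sup>2 * ln (6 / (3 - 5 * c))))"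
    (* adversary *)
    and static_if_not_adaptive: "\<not> adaptive \<Longrightarrow> static_adv Bsel"
    and Bsel_sub: "\<And>t h S. Bsel t h S \<subseteq> {..<M}"
    and Bsel_card: "\<And>t h S. card (Bsel t h S) = \<tau> t"
    and byz_sign: "\<And>t h S H m i. m \<in> S \<inter> Bsel t h S \<Longrightarrow> byz t h S H m $ i \<in> {-1, 1}"
  shows
    "((adaptive \<or> (\<forall>t<T. real (\<tau> t) \<le> 2 / p\<^sup>2 * ln (6 / c))) \<longrightarrow>
       (1 / real T) * (\<Sum>t<T. measure_pmf.expectation (sss_proc M n p B \<beta> \<eta> gradf sd Bsel byz w0 t)
                                  (\<lambda>h. l1norm (gradF (last h))))
       \<le> (1 / c) * ((F w0 - Fstar) * sqrt d / sqrt (real T) + L * sqrt d / (2 * sqrt (real T))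
             + d / sqrt (2 * pi) * (B + \<beta>) * exp (- real n / 2) + 2 * d * c0 / sqrt (real M)
             + 4 * d * (B + \<beta>) * (\<Sum>t<T. real (\<tau> t)) / (p * real T * real M)))
     \<and>
     ((\<not> adaptive \<and> (\<forall>t<T. real (\<tau> t) > 2 / p\<^sup>2 * ln (6 / c))) \<longrightarrow>
       (1 / real T) * (\<Sum>t<T. measure_pmf.expectation (sss_proc M n p B \<beta> \<eta> gradf sd Bsel byz w0 t)
                                  (\<lambda>h. l1norm (gradF (last h))))
       \<le> (1 / c) * ((F w0 - Fstar) * sqrt d / sqrt (real T) + L * sqrt d / (2 * sqrt (real T))
             + d / sqrt (2 * pi) * (B + \<beta>) * exp (- real n / 2) + 2 * d * c0 / sqrt (real M)
             + 6 * d * (B + \<beta>) * (\<Sum>t<T. real (\<tau> t)) / (real T * real M)))"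
proof -
  interpret byzantine_sign_sgd M n p B \<beta> \<eta> gradf sd Bsel byz \<tau>
    using M_pos n_pos p_range beta_pos sd_nonneg Bsel_sub Bsel_card byz_sign
      abs_grad_add_sd_less[OF Bi_pos Bi_bound B0_def sigma_def B_def eps_gt]
    by unfold_locales auto
  have "sqrt (8 * (B + \<beta>)\<^sup>2 / p\<^sup>2 * ln (6 / (3 - 5 * c))) = (B + \<beta>) / p * sqrt (8 * ln (6 / (3 - 5 * c)))"
    using B_pos beta_pos p_range by (simp add: real_sqrt_mult real_sqrt_divide mult_ac)
  hence c0: "c0 \<ge> (B + \<beta>) / p * sqrt (8 * ln (6 / (3 - 5 * c)))"
    by (simp add: c0_def)
  have gradF: "gradF w $ i = avg_grad w i" for w i
    by (simp add: gradF_def avg_grad_def sum_component)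
  have \<eta>: "\<eta> = 1 / sqrt (real CARD('d) * real T)"
    by (simp add: eta_def d_def)
  have clip_bias: "d * (clip_bias + 2 * c0 / sqrt M)
      = d / sqrt (2 * pi) * (B + \<beta>) * exp (- real n / 2) + 2 * d * c0 / sqrt M"
    by (simp add: clip_bias_def std_normal_density_def algebra_simps)
  note adaptive = average_l1_gradient_le_adaptive[OF smooth L_nonneg lower T_pos \<eta> gradF c_range c0]
  note static = average_l1_gradient_le_static[OF smooth L_nonneg lower T_pos \<eta> gradF c_range c0 static_if_not_adaptive]
  show ?thesis
    using adaptive[folded d_def] static[folded d_def] unfolding clip_bias by (simp add: field_simps)
qed

end
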